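(* Let $((f_t),(g_t),(h_t))$ be a $W_{1,+}$-geodesic on $G$ with associated function $m$ and functions $P_t,Q_t$ as in the context. Then there exist two functions $a,b:G\to\mathbb{R}$ such that for all $t\in[0,1]$ and $z\in G$, $$P_t(z)=\frac{1}{m(z)}\sum_{x\le z}m(x,z)\,a(x)\,\frac{t^{d(x,z)}}{d(x,z)!},\qquad Q_t(z)=\frac{1}{m(z)}\sum_{y\ge z}m(z,y)\,b(y)\,\frac{(1-t)^{d(z,y)}}{d(z,y)!}.$$
   Context: $G$ is a connected, locally finite graph with graph distance $d$; geodesics are paths of adjacent vertices $\gamma(0),\dots,\gamma(n)$ with $n=d(\gamma(0),\gamma(n))$, $e_0(\gamma)=\gamma(0)$, $e_1(\gamma)=\gamma(n)$. For finitely supported probability distributions $f_0,f_1$: $\Pi_1(f_0,f_1)$ = couplings minimizing $\sum d(x,y)\pi(x,y)$ (minimum $W_1$), $\mathcal{C}(f_0,f_1)=\{(x,y):\pi(x,y)>0$ for some $\pi\in\Pi_1\}$; $W_1$-orientation: adjacent $x,y$ get $x\to y$ iff some geodesic $\gamma$ with $(e_0(\gamma),e_1(\gamma))\in\mathcal{C}(f_0,f_1)$ has $\gamma(k)=x,\gamma(k+1)=y$. Oriented paths: $\gamma(i)\to\gamma(i+1)$; $x\le y$ iff an oriented path (possibly of length $0$) goes from $x$ to $y$; $\gamma_i=\gamma(i)$. $E(G)=\{(xy):x\to y\}$, $T(G)$ triples $x_0\to x_1\to x_2$, $\mathcal{F}(x)=\{y:x\to y\}$, $\mathcal{E}(x)=\{y:y\to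 x\}$; $\nabla g(x_1)=\sum_{\mathcal{F}(x_1)}g(x_1x_2)-\sum_{\mathcal{E}(x_1)}g(x_0x_1)$, $\nabla h(x_1x_2)=\sum_{x_3\in\mathcal{F}(x_2)}h(x_1x_2x_3)-\sum_{x_0\in\mathcal{E}(x_1)}h(x_0x_1x_2)$. $W_{1,+}$-geodesic: a family $(f_t)_{t\in[0,1]}$ from $f_0$ to $f_1$ with $W_1(f_s,f_t)=|t-s|W_1(f_0,f_1)$, differentiable in $t$, with $g_t$ on $E(G)$, $h_t$ on $T(G)$, $\partial_tf_t=-\nabla g_t$, $\partial_tg_t=-\nabla h_t$, $g_t>0$, $f_t(x_1)h_t(x_0x_1x_2)=g_t(x_0x_1)g_t(x_1x_2)$. $C_\gamma(t)=f_t(\gamma_0)$ if $L(\gamma)=0$, $g_t(\gamma_0\gamma_1)$ if $L(\gamma)=1$, $\prod_{i=0}^{n-1}g_t(\gamma_i\gamma_{i+1})/\prod_{j=1}^{n-1}f_t(\gamma_j)$ if $n\ge2$. $\mathcal{A}=\{x:\mathcal{E}(x)=\emptyset\}$, $\mathcal{B}=\{x:\mathcal{F}(x)=\emptyset\}$; extremal oriented paths start in $\mathcal{A}$, end in $\mathcal{B}$; $\mathrm{SE}\Gamma_{1,x}$: oriented paths from a vertex of $\mathcal{A}$ to $x$; $\mathrm{SE}\Gamma_{2,x}$: oriented paths from $x$ to a vertex of $\mathcal{B}$. For $z_1\le\cdots\le z_p$, $m(z_1,\dots,z_p)=\sum_\gamma C_\gamma(0)$ over extremal oriented paths $\gamma$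 with indices $k_1\le\dots\le k_p$, $\gamma(k_i)=z_i$ (for extremal $\gamma$, $C_\gamma(t)$ is independent of $t$). $P_t(x)=\frac{1}{m(x)}\sum_{\gamma\in\mathrm{SE}\Gamma_{2,x}}C_\gamma(t)$, $Q_t(x)=\frac{1}{m(x)}\sum_{\gamma\in\mathrm{SE}\Gamma_{1,x}}C_\gamma(t)$. *)

theory Defs
  imports "HOL-Analysis.Analysis"
begin

(* A path along a relation R: a nonempty vertex list with consecutive vertices related.
   gamma(i) = gamma ! i, the length L(gamma) is length gamma - 1. *)
definition path_in :: "('v \<Rightarrow> 'v \<Rightarrow> bool) \<Rightarrow> 'v list \<Rightarrow> bool" where
  "path_in R \<gamma> \<longleftrightarrow> \<gamma> \<noteq> [] \<and> (\<forall>i. Suc i < length \<gamma> \<longrightarrow> R (\<gamma> ! i) (\<gamma> ! Suc i))"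

definition gdist :: "('v \<Rightarrow> 'v \<Rightarrow> bool) \<Rightarrow> 'v \<Rightarrow> 'v \<Rightarrow> nat" where
  "gdist adj x y = (LEAST n. \<exists>\<gamma>. path_in adj \<gamma> \<and> hd \<gamma> = x \<and> last \<gamma> = y \<and> length \<gamma> = Suc n)"

definition geodesic :: "('v \<Rightarrow> 'v \<Rightarrow> bool) \<Rightarrow> 'v list \<Rightarrow> bool" where
  "geodesic adj \<gamma> \<longleftrightarrow> path_in adj \<gamma> \<and> length \<gamma> = Suc (gdist adj (hd \<gamma>) (last \<gamma>))"

definition prob_dist :: "('v \<Rightarrow> real) \<Rightarrow> bool" where
  "prob_dist f \<longleftrightarrow> (\<forall>x. f x \<ge> 0) \<and> finite {x. f x \<noteq> 0} \<and> (\<Sum>x\<in>{x. f x \<noteq> 0}. f x) = 1"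

definition coupling :: "('v \<Rightarrow> real) \<Rightarrow> ('v \<Rightarrow> real) \<Rightarrow> ('v \<Rightarrow> 'v \<Rightarrow> real) \<Rightarrow> bool" where
  "coupling f0 f1 \<pi> \<longleftrightarrow> (\<forall>x y. \<pi> x y \<ge> 0) \<and> finite {(x,y). \<pi> x y \<noteq> 0}
     \<and> (\<forall>x. (\<Sum>y\<in>{y. \<pi> x y \<noteq> 0}. \<pi> x y) = f0 x)
     \<and> (\<forall>y. (\<Sum>x\<in>{x. \<pi> x y \<noteq> 0}. \<pi> x y) = f1 y)"

definition transport_cost :: "('v \<Rightarrow> 'v \<Rightarrow> bool) \<Rightarrow> ('v \<Rightarrow> 'v \<Rightarrow> real) \<Rightarrow> real" where
  "transport_cost adj \<pi> = (\<Sum>(x,y)\<in>{(x,y). \<pi> x y \<noteq> 0}. real (gdist adj x y) * \<pi> x y)"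

definition W1 :: "('v \<Rightarrow> 'v \<Rightarrow> bool) \<Rightarrow> ('v \<Rightarrow> real) \<Rightarrow> ('v \<Rightarrow> real) \<Rightarrow> real" where
  "W1 adj f0 f1 = Inf (transport_cost adj ` {\<pi>. coupling f0 f1 \<pi>})"

definition opt_couplings :: "('v \<Rightarrow> 'v \<Rightarrow> bool) \<Rightarrow> ('v \<Rightarrow> real) \<Rightarrow> ('v \<Rightarrow> real) \<Rightarrow> ('v \<Rightarrow> 'v \<Rightarrow> real) set" where
  "opt_couplings adj f0 f1 = {\<pi>. coupling f0 f1 \<pi> \<and> transport_cost adj \<pi> = W1 adj f0 f1}"

definition Cset :: "('v \<Rightarrow> 'v \<Rightarrow> bool) \<Rightarrow> ('v \<Rightarrow> real) \<Rightarrow> ('v \<Rightarrow> real) \<Rightarrow> ('v \<times> 'v) set" where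
  "Cset adj f0 f1 = {(x,y). \<exists>\<pi>\<in>opt_couplings adj f0 f1. \<pi> x y > 0}"

definition orient :: "('v \<Rightarrow> 'v \<Rightarrow> bool) \<Rightarrow> ('v \<Rightarrow> real) \<Rightarrow> ('v \<Rightarrow> real) \<Rightarrow> 'v \<Rightarrow> 'v \<Rightarrow> bool" where
  "orient adj f0 f1 x y \<longleftrightarrow> adj x y \<and>
     (\<exists>\<gamma> k. geodesic adj \<gamma> \<and> (hd \<gamma>, last \<gamma>) \<in> Cset adj f0 f1 \<and> Suc k < length \<gamma>
            \<and> \<gamma> ! k = x \<and> \<gamma> ! Suc k = y)"

(* x \<le> y : an oriented path (possibly of length 0) from x to y *)
definition oleq :: "('v \<Rightarrow> 'v \<Rightarrow> bool) \<Rightarrow> 'v \<Rightarrow> 'v \<Rightarrow> bool" where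
  "oleq arr x y \<longleftrightarrow> (\<exists>\<gamma>. path_in arr \<gamma> \<and> hd \<gamma> = x \<and> last \<gamma> = y)"

definition fwd :: "('v \<Rightarrow> 'v \<Rightarrow> bool) \<Rightarrow> 'v \<Rightarrow> 'v set" where
  "fwd arr x = {y. arr x y}"

definition bwd :: "('v \<Rightarrow> 'v \<Rightarrow> bool) \<Rightarrow> 'v \<Rightarrow> 'v set" where
  "bwd arr x = {y. arr y x}"

definition div_g :: "('v \<Rightarrow> 'v \<Rightarrow> bool) \<Rightarrow> ('v \<Rightarrow> 'v \<Rightarrow> real) \<Rightarrow> 'v \<Rightarrow> real" where
  "div_g arr g x1 = (\<Sum>x2\<in>fwd arr x1. g x1 x2) - (\<Sum>x0\<in>bwd arr x1. g x0 x1)"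

definition div_h :: "('v \<Rightarrow> 'v \<Rightarrow> bool) \<Rightarrow> ('v \<Rightarrow> 'v \<Rightarrow> 'v \<Rightarrow> real) \<Rightarrow> 'v \<Rightarrow> 'v \<Rightarrow> real" where
  "div_h arr h x1 x2 = (\<Sum>x3\<in>fwd arr x2. h x1 x2 x3) - (\<Sum>x0\<in>bwd arr x1. h x0 x1 x2)"

definition W1plus_geodesic :: "('v \<Rightarrow> 'v \<Rightarrow> bool) \<Rightarrow> (real \<Rightarrow> 'v \<Rightarrow> real)
    \<Rightarrow> (real \<Rightarrow> 'v \<Rightarrow> 'v \<Rightarrow> real) \<Rightarrow> (real \<Rightarrow> 'v \<Rightarrow> 'v \<Rightarrow> 'v \<Rightarrow> real) \<Rightarrow> bool" where
  "W1plus_geodesic adj f g h \<longleftrightarrow>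
    (let arr = orient adj (f 0) (f 1) in
     (\<forall>t\<in>{0..1}. prob_dist (f t)) \<and>
     (\<forall>s\<in>{0..1}. \<forall>t\<in>{0..1}. W1 adj (f s) (f t) = \<bar>t - s\<bar> * W1 adj (f 0) (f 1)) \<and>
     (\<forall>x. \<forall>t\<in>{0..1}. ((\<lambda>s. f s x) has_real_derivative (- div_g arr (g t) x)) (at t within {0..1})) \<and>
     (\<forall>x1 x2. arr x1 x2 \<longrightarrow> (\<forall>t\<in>{0..1}.
        ((\<lambda>s. g s x1 x2) has_real_derivative (- div_h arr (h t) x1 x2)) (at t within {0..1}))) \<and>
     (\<forall>x1 x2. arr x1 x2 \<longrightarrow> (\<forall>t\<in>{0..1}. g t x1 x2 > 0)) \<and>
     (\<forall>x0 x1 x2. arr x0 x1 \<longrightarrow> arr x1 x2 \<longrightarrow> (\<forall>t\<in>{0..1}.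
        f t x1 * h t x0 x1 x2 = g t x0 x1 * g t x1 x2)))"

definition Cpath :: "(real \<Rightarrow> 'v \<Rightarrow> real) \<Rightarrow> (real \<Rightarrow> 'v \<Rightarrow> 'v \<Rightarrow> real) \<Rightarrow> real \<Rightarrow> 'v list \<Rightarrow> real" where
  "Cpath f g t \<gamma> = (let n = length \<gamma> - 1 in
     if n = 0 then f t (\<gamma> ! 0)
     else if n = 1 then g t (\<gamma> ! 0) (\<gamma> ! 1)
     else (\<Prod>i<n. g t (\<gamma> ! i) (\<gamma> ! Suc i)) / (\<Prod>j\<in>{1..n-1}. f t (\<gamma> ! j)))"

definition Aset :: "('v \<Rightarrow> 'v \<Rightarrow> bool) \<Rightarrow> 'v set" where
  "Aset arr = {x. bwd arr x = {}}"

definition Bset :: "('v \<Rightarrow> 'v \<Rightarrow> bool) \<Rightarrow> 'v set" where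
  "Bset arr = {x. fwd arr x = {}}"

definition extremal :: "('v \<Rightarrow> 'v \<Rightarrow> bool) \<Rightarrow> 'v list \<Rightarrow> bool" where
  "extremal arr \<gamma> \<longleftrightarrow> path_in arr \<gamma> \<and> hd \<gamma> \<in> Aset arr \<and> last \<gamma> \<in> Bset arr"

definition mval :: "('v \<Rightarrow> 'v \<Rightarrow> bool) \<Rightarrow> (real \<Rightarrow> 'v \<Rightarrow> real) \<Rightarrow> (real \<Rightarrow> 'v \<Rightarrow> 'v \<Rightarrow> real) \<Rightarrow> 'v list \<Rightarrow> real" where
  "mval arr f g zs = (\<Sum>\<gamma>\<in>{\<gamma>. extremal arr \<gamma> \<and>
      (\<exists>ks. length ks = length zs \<and> sorted ks \<and>
         (\<forall>i<length zs. ks ! i < length \<gamma> \<and> \<gamma> ! (ks ! i) = zs ! i))}. Cpath f g 0 \<gamma>)"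

definition Pt :: "('v \<Rightarrow> 'v \<Rightarrow> bool) \<Rightarrow> (real \<Rightarrow> 'v \<Rightarrow> real) \<Rightarrow> (real \<Rightarrow> 'v \<Rightarrow> 'v \<Rightarrow> real) \<Rightarrow> real \<Rightarrow> 'v \<Rightarrow> real" where
  "Pt arr f g t x = (1 / mval arr f g [x]) *
     (\<Sum>\<gamma>\<in>{\<gamma>. path_in arr \<gamma> \<and> hd \<gamma> = x \<and> last \<gamma> \<in> Bset arr}. Cpath f g t \<gamma>)"

definition Qt :: "('v \<Rightarrow> 'v \<Rightarrow> bool) \<Rightarrow> (real \<Rightarrow> 'v \<Rightarrow> real) \<Rightarrow> (real \<Rightarrow> 'v \<Rightarrow> 'v \<Rightarrow> real) \<Rightarrow> real \<Rightarrow> 'v \<Rightarrow> real" where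
  "Qt arr f g t x = (1 / mval arr f g [x]) *
     (\<Sum>\<gamma>\<in>{\<gamma>. path_in arr \<gamma> \<and> hd \<gamma> \<in> Aset arr \<and> last \<gamma> = x}. Cpath f g t \<gamma>)"

end

theory Submission
  imports Defs
begin

text \<open>
  The weight \<open>C\<^sub>\<gamma>(t)\<close> of an oriented path satisfies a continuity equation: its derivative is
  what flows in at the head of \<open>\<gamma>\<close> minus what flows out at its tail. Hence the mass \<open>S\<^sub>p(t)\<close>
  of all continuations of \<open>p\<close> to a sink obeys \<open>S\<^sub>p' = \<Sum>\<^sub>w\<^sub>\<rightarrow>\<^sub>h\<^sub>d \<^sub>p S\<^sub>w\<^sub>p\<close>.
  Cyclical monotonicity of optimal couplings shows that oriented paths are geodesics, so their
  lengths are bounded and this triangular system is solved by its Taylor polynomial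
  \<open>S\<^sub>p(t) = \<Sum>\<^sub>q S\<^sub>q\<^sub>p(0) t\<^bsup>|q|\<^esup>/|q|!\<close>, the sum running over oriented paths \<open>q\<close> ending at the
  head of \<open>p\<close>. Grouping by the starting point \<open>x\<close>, all paths from \<open>x\<close> to \<open>z\<close> have length
  \<open>d(x, z)\<close>, and gluing them to paths from the sources shows that their total mass is
  \<open>m(x, z)\<close> times a factor \<open>a(x)\<close>. The formula for \<open>Q\<^sub>t\<close> is the one for \<open>P\<^sub>t\<close> after reversing
  time and orientation.
\<close>

section \<open>Oriented paths\<close>

lemma path_in_singleton [simp]: "path_in R [x]"
  by (simp add: path_in_def)

lemma not_path_in_Nil [simp]: "\<not> path_in R []"
  by (simp add: path_in_def)

lemma path_in_Cons_Cons [simp]: "path_in R (x # y # r) \<longleftrightarrow> R x y \<and> path_in R (y # r)"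
  unfolding path_in_def by (auto simp: nth_Cons split: nat.splits)

lemma path_in_Cons: "path_in R (x # c) \<longleftrightarrow> c = [] \<or> (R x (hd c) \<and> path_in R c)"
  by (cases c) auto

lemma path_in_not_Nil: "path_in R c \<Longrightarrow> c \<noteq> []"
  by (simp add: path_in_def)

lemma path_in_join:
  "path_in R a \<Longrightarrow> path_in R b \<Longrightarrow> last a = hd b \<Longrightarrow> path_in R (a @ tl b)"
proof (induction a)
  case (Cons x a)
  show ?case
  proof (cases a)
    case Nil
    with Cons show ?thesis by (cases b) auto
  next
    case (Cons y a')
    with Cons.prems Cons.IH show ?thesis by (auto simp: path_in_Cons)
  qed
qed simp

lemma path_in_snoc: "path_in R (a @ [y]) \<longleftrightarrow> a = [] \<or> (path_in R a \<and> R (last a) y)"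
proof (induction a)
  case (Cons x a)
  then show ?case by (cases a) auto
qed simp

lemma path_in_take: "path_in R c \<Longrightarrow> 0 < k \<Longrightarrow> path_in R (take k c)"
  unfolding path_in_def by auto

lemma path_in_drop: "path_in R c \<Longrightarrow> k < length c \<Longrightarrow> path_in R (drop k c)"
  unfolding path_in_def by auto

lemma path_in_rev: "path_in R (rev c) \<longleftrightarrow> path_in (\<lambda>x y. R y x) c"
proof (induction c)
  case (Cons x c)
  then show ?case by (auto simp: path_in_snoc path_in_Cons last_rev)
qed simp

lemma path_in_mono: "path_in R c \<Longrightarrow> (\<And>x y. R x y \<Longrightarrow> S x y) \<Longrightarrow> path_in S c"
  unfolding path_in_def by auto

lemma path_in_first_last_edge:
  assumes "path_in R c" "length c \<ge> 2"
  shows "R (hd c) (c ! 1)" "R (c ! (length c - 2)) (last c)"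
proof -
  have "c \<noteq> []" using assms(1) by (rule path_in_not_Nil)
  moreover have "R (c ! 0) (c ! 1)" and "R (c ! (length c - 2)) (c ! Suc (length c - 2))"
    using assms unfolding path_in_def by auto
  moreover have "Suc (length c - 2) = length c - 1" using assms(2) by simp
  ultimately show "R (hd c) (c ! 1)" "R (c ! (length c - 2)) (last c)"
    by (simp_all add: hd_conv_nth last_conv_nth)
qed

lemma path_split_at:
  assumes p: "path_in R c" and i: "i < length c"
  shows "c = take (Suc i) c @ tl (drop i c)" "path_in R (take (Suc i) c)" "path_in R (drop i c)"
    "last (take (Suc i) c) = c ! i" "hd (drop i c) = c ! i"
    "hd (take (Suc i) c) = hd c" "last (drop i c) = last c"
proof -
  show "c = take (Suc i) c @ tl (drop i c)"
    by (metis append_take_drop_id drop_Suc tl_drop)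
  show "path_in R (take (Suc i) c)" using path_in_take[OF p] by simp
  show "path_in R (drop i c)" using path_in_drop[OF p i] .
  show "last (take (Suc i) c) = c ! i" using i by (subst last_conv_nth) auto
  show "hd (drop i c) = c ! i" using i by (simp add: hd_drop_conv_nth)
  show "hd (take (Suc i) c) = hd c" using i by (cases c) auto
  show "last (drop i c) = last c" using i by simp
qed

lemma finite_paths_bounded_length:
  assumes fin: "\<And>x. finite {y. R x y}"
  shows "finite {c. path_in R c \<and> hd c = x \<and> length c \<le> n}"
proof (induction n arbitrary: x)
  case 0
  then show ?case by (simp add: path_in_def)
next
  case (Suc n)
  have "{c. path_in R c \<and> hd c = x \<and> length c \<le> Suc n} \<subseteq>
        insert [x] (\<Union>y\<in>{y. R x y}. Cons x ` {c. path_in R c \<and> hd c = y \<and> length c \<le> n})"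
  proof
    fix c assume "c \<in> {c. path_in R c \<and> hd c = x \<and> length c \<le> Suc n}"
    then obtain r where c: "c = x # r" "path_in R c" "length c \<le> Suc n"
      by (cases c) (auto simp: path_in_def)
    then show "c \<in> insert [x] (\<Union>y\<in>{y. R x y}. Cons x ` {c. path_in R c \<and> hd c = y \<and> length c \<le> n})"
      by (cases r) auto
  qed
  moreover have "finite (insert [x] (\<Union>y\<in>{y. R x y}. Cons x ` {c. path_in R c \<and> hd c = y \<and> length c \<le> n}))"
    using Suc fin by auto
  ultimately show ?case by (rule finite_subset)
qed

lemma join_eq_butlast_append:
  "a \<noteq> [] \<Longrightarrow> b \<noteq> [] \<Longrightarrow> last a = hd b \<Longrightarrow> a @ tl b = butlast a @ b"
  by (metis append.assoc append_Cons append_Nil append_butlast_last_id list.collapse)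

lemma last_join: "a \<noteq> [] \<Longrightarrow> b \<noteq> [] \<Longrightarrow> last a = hd b \<Longrightarrow> last (a @ tl b) = last b"
  by (metis join_eq_butlast_append last_appendR)

text \<open>A distinct list is split at most once at a given vertex.\<close>
lemma join_eq_joinD:
  assumes d: "distinct (a @ tl b)" and ne: "a \<noteq> []" "b \<noteq> []" "a' \<noteq> []" "b' \<noteq> []"
    and l: "last a = x" "hd b = x" "last a' = x" "hd b' = x"
    and eq: "a @ tl b = a' @ tl b'"
  shows "a = a' \<and> b = b'"
proof -
  let ?c = "a @ tl b"
  have i1: "?c ! (length a - 1) = x" using ne l by (simp add: nth_append last_conv_nth)
  have i2: "?c ! (length a' - 1) = x" using ne l eq by (simp add: nth_append last_conv_nth)
  have L1: "length a - 1 < length ?c" using ne(1) by (cases a) auto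
  have "length ?c = length a' + length (tl b')" using eq by simp
  then have L2: "length a' - 1 < length ?c" using ne(3) by (cases a') auto
  have "length a - 1 = length a' - 1" using nth_eq_iff_index_eq[OF d L1 L2] i1 i2 by simp
  then have "length a = length a'" using ne by (cases a; cases a') auto
  then have "a = a' \<and> tl b = tl b'" using append_eq_append_conv[of a a' "tl b" "tl b'"] eq by simp
  then show ?thesis using ne l by (cases b; cases b') auto
qed

lemma sum_join_image:
  assumes "finite A" "finite B" "inj_on (\<lambda>(a, b). a @ tl b) (A \<times> B)"
  shows "(\<Sum>a\<in>A. \<Sum>b\<in>B. \<phi> (a @ tl b)) = (\<Sum>c\<in>(\<lambda>(a, b). a @ tl b) ` (A \<times> B). \<phi> c)"
  using sum.reindex[OF assms(3), of \<phi>] by (simp add: sum.cartesian_product case_prod_beta)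

lemma Aset_converse: "Aset (\<lambda>x y. R y x) = Bset R"
  and Bset_converse: "Bset (\<lambda>x y. R y x) = Aset R"
  unfolding Aset_def Bset_def fwd_def bwd_def by auto

lemma oleq_converse: "oleq (\<lambda>x y. R y x) y z \<longleftrightarrow> oleq R z y"
proof -
  have "oleq R z y" if yz: "oleq (\<lambda>x y. R y x) y z" for R :: "'a \<Rightarrow> 'a \<Rightarrow> bool" and y z
  proof -
    obtain c where c: "path_in (\<lambda>x y. R y x) c" "hd c = y" "last c = z"
      using yz unfolding oleq_def by blast
    then have "path_in R (rev c)" "hd (rev c) = z" "last (rev c) = y"
      using path_in_not_Nil[OF c(1)] by (simp_all add: path_in_rev hd_rev last_rev)
    then show ?thesis unfolding oleq_def by blast
  qed
  from this[of R y z] this[of "\<lambda>x y. R y x" z y] show ?thesis by auto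
qed

lemma extremal_rev: "extremal (\<lambda>x y. R y x) (rev c) \<longleftrightarrow> extremal R c"
proof -
  have "path_in (\<lambda>x y. R y x) (rev c) \<longleftrightarrow> path_in R c"
    using path_in_rev[of "\<lambda>x y. R y x" c] by simp
  moreover have "c \<noteq> [] \<Longrightarrow> hd (rev c) = last c \<and> last (rev c) = hd c"
    by (simp add: hd_rev last_rev)
  ultimately show ?thesis
    unfolding extremal_def Aset_converse[of R] Bset_converse[of R] by (metis path_in_not_Nil)
qed

definition paths_from :: "('v \<Rightarrow> 'v \<Rightarrow> bool) \<Rightarrow> 'v \<Rightarrow> 'v list set" where
  "paths_from R x = {c. path_in R c \<and> hd c = x}"

definition paths_to :: "('v \<Rightarrow> 'v \<Rightarrow> bool) \<Rightarrow> 'v \<Rightarrow> 'v list set" where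
  "paths_to R x = {c. path_in R c \<and> last c = x}"

definition paths_between :: "('v \<Rightarrow> 'v \<Rightarrow> bool) \<Rightarrow> 'v \<Rightarrow> 'v \<Rightarrow> 'v list set" where
  "paths_between R x z = {c. path_in R c \<and> hd c = x \<and> last c = z}"

definition paths_to_sinks :: "('v \<Rightarrow> 'v \<Rightarrow> bool) \<Rightarrow> 'v \<Rightarrow> 'v list set" where
  "paths_to_sinks R x = {c. path_in R c \<and> hd c = x \<and> last c \<in> Bset R}"

definition paths_from_sources :: "('v \<Rightarrow> 'v \<Rightarrow> bool) \<Rightarrow> 'v \<Rightarrow> 'v list set" where
  "paths_from_sources R x = {c. path_in R c \<and> hd c \<in> Aset R \<and> last c = x}"

definition sink_paths_via :: "('v \<Rightarrow> 'v \<Rightarrow> bool) \<Rightarrow> 'v \<Rightarrow> 'v \<Rightarrow> 'v list set" where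
  "sink_paths_via R x z = {c. path_in R c \<and> hd c = x \<and> last c \<in> Bset R \<and> z \<in> set c}"

definition extremal_via :: "('v \<Rightarrow> 'v \<Rightarrow> bool) \<Rightarrow> 'v \<Rightarrow> 'v \<Rightarrow> 'v list set" where
  "extremal_via R x z =
     {c. extremal R c \<and> (\<exists>i j. i \<le> j \<and> j < length c \<and> c ! i = x \<and> c ! j = z)}"

lemma paths_to_decomp:
  "paths_to R x = insert [x] (\<Union>w\<in>{w. R w x}. (\<lambda>c. c @ [x]) ` paths_to R w)"
proof (intro set_eqI iffI)
  fix c assume c: "c \<in> paths_to R x"
  then have ce: "c = butlast c @ [x]" unfolding paths_to_def using path_in_not_Nil by fastforce
  show "c \<in> insert [x] (\<Union>w\<in>{w. R w x}. (\<lambda>c. c @ [x]) ` paths_to R w)"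
  proof (cases "butlast c = []")
    case True
    then show ?thesis using ce by auto
  next
    case False
    then have "path_in R (butlast c) \<and> R (last (butlast c)) x"
      using c ce path_in_snoc[of R "butlast c" x] unfolding paths_to_def by auto
    then show ?thesis using ce False unfolding paths_to_def by blast
  qed
qed (auto simp: path_in_snoc paths_to_def)

lemma join_paths_between_paths_to_sinks:
  "(\<lambda>(a, b). a @ tl b) ` (paths_between R x z \<times> paths_to_sinks R z) = sink_paths_via R x z"
proof (intro set_eqI iffI)
  fix c assume "c \<in> (\<lambda>(a, b). a @ tl b) ` (paths_between R x z \<times> paths_to_sinks R z)"
  then obtain a b where c: "c = a @ tl b" and a: "path_in R a" "hd a = x" "last a = z"
    and b: "path_in R b" "hd b = z" "last b \<in> Bset R"
    unfolding paths_between_def paths_to_sinks_def by auto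
  have ne: "a \<noteq> []" "b \<noteq> []" using a b path_in_not_Nil by auto
  then show "c \<in> sink_paths_via R x z" unfolding sink_paths_via_def c
    using path_in_join[OF a(1) b(1)] a b last_join[OF ne] last_in_set[OF ne(1)] by simp
next
  fix c assume "c \<in> sink_paths_via R x z"
  then have c: "path_in R c" "hd c = x" "last c \<in> Bset R" "z \<in> set c"
    unfolding sink_paths_via_def by auto
  obtain j where j: "j < length c" "c ! j = z" using c(4) by (metis in_set_conv_nth)
  note split = path_split_at[OF c(1) j(1)]
  have "take (Suc j) c \<in> paths_between R x z" "drop j c \<in> paths_to_sinks R z"
    unfolding paths_between_def paths_to_sinks_def using split c j by auto
  then show "c \<in> (\<lambda>(a, b). a @ tl b) ` (paths_between R x z \<times> paths_to_sinks R z)"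
    using split(1) by (intro image_eqI[where x = "(take (Suc j) c, drop j c)"]) auto
qed

lemma join_paths_from_sources_sink_paths_via:
  "(\<lambda>(a, b). a @ tl b) ` (paths_from_sources R x \<times> sink_paths_via R x z) = extremal_via R x z"
proof (intro set_eqI iffI)
  fix c assume "c \<in> (\<lambda>(a, b). a @ tl b) ` (paths_from_sources R x \<times> sink_paths_via R x z)"
  then obtain a b where c: "c = a @ tl b" and a: "path_in R a" "hd a \<in> Aset R" "last a = x"
    and b: "path_in R b" "hd b = x" "last b \<in> Bset R" "z \<in> set b"
    unfolding paths_from_sources_def sink_paths_via_def by auto
  have ne: "a \<noteq> []" "b \<noteq> []" using a b path_in_not_Nil by auto
  have cb: "c = butlast a @ b" using c join_eq_butlast_append[OF ne] a b by simp
  obtain k where k: "k < length b" "b ! k = z" using b(4) by (metis in_set_conv_nth)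
  have "c ! length (butlast a) = x" using cb b(2) ne(2) by (simp add: nth_append hd_conv_nth)
  moreover have "c ! (length (butlast a) + k) = z" "length (butlast a) + k < length c"
    using cb k by (simp_all add: nth_append)
  moreover have "extremal R c" unfolding extremal_def c
    using path_in_join[OF a(1) b(1)] a b last_join[OF ne] ne by simp
  ultimately show "c \<in> extremal_via R x z" unfolding extremal_via_def
    by (intro CollectI conjI exI[of _ "length (butlast a)"] exI[of _ "length (butlast a) + k"]) auto
next
  fix c assume "c \<in> extremal_via R x z"
  then obtain i j where e: "extremal R c" and ij: "i \<le> j" "j < length c" "c ! i = x" "c ! j = z"
    unfolding extremal_via_def by auto
  have c: "path_in R c" "hd c \<in> Aset R" "last c \<in> Bset R" using e unfolding extremal_def by auto
  note split = path_split_at[OF c(1), of i]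
  have "drop i c ! (j - i) = z" "j - i < length (drop i c)" using ij by simp_all
  then have "z \<in> set (drop i c)" by (metis nth_mem)
  then have "drop i c \<in> sink_paths_via R x z" "take (Suc i) c \<in> paths_from_sources R x"
    unfolding sink_paths_via_def paths_from_sources_def using split c ij by auto
  then show "c \<in> (\<lambda>(a, b). a @ tl b) ` (paths_from_sources R x \<times> sink_paths_via R x z)"
    using split ij by (intro image_eqI[where x = "(take (Suc i) c, drop i c)"]) auto
qed

lemma mval_pair: "mval R F G [x, z] = (\<Sum>c\<in>extremal_via R x z. Cpath F G 0 c)"
proof -
  have "(\<exists>ks. length ks = length [x, z] \<and> sorted ks \<and>
         (\<forall>i<length [x, z]. ks ! i < length c \<and> c ! (ks ! i) = [x, z] ! i)) \<longleftrightarrow>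
        (\<exists>i j. i \<le> j \<and> j < length c \<and> c ! i = x \<and> c ! j = z)" for c
  proof
    assume "\<exists>ks. length ks = length [x, z] \<and> sorted ks \<and>
         (\<forall>i<length [x, z]. ks ! i < length c \<and> c ! (ks ! i) = [x, z] ! i)"
    then obtain i j where "sorted [i, j]" "\<forall>k<2. [i, j] ! k < length c \<and> c ! ([i, j] ! k) = [x, z] ! k"
      by (auto simp: length_Suc_conv numeral_2_eq_2)
    then show "\<exists>i j. i \<le> j \<and> j < length c \<and> c ! i = x \<and> c ! j = z"
      by (metis (no_types, lifting) less_2_cases_iff nth_Cons_0 nth_Cons_Suc One_nat_def sorted2)
  next
    assume "\<exists>i j. i \<le> j \<and> j < length c \<and> c ! i = x \<and> c ! j = z"
    then obtain i j where ij: "i \<le> j" "j < length c" "c ! i = x" "c ! j = z" by blast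
    then have "\<forall>k<2. [i, j] ! k < length c \<and> c ! ([i, j] ! k) = [x, z] ! k"
      by (auto simp: less_2_cases_iff)
    then show "\<exists>ks. length ks = length [x, z] \<and> sorted ks \<and>
         (\<forall>i<length [x, z]. ks ! i < length c \<and> c ! (ks ! i) = [x, z] ! i)"
      using ij by (intro exI[of _ "[i, j]"]) (simp add: numeral_2_eq_2)
  qed
  then show ?thesis unfolding mval_def extremal_via_def by simp
qed


lemma paths_to_sinks_converse:
  "paths_to_sinks (\<lambda>x y. R y x) z = rev ` paths_from_sources R z"
proof (intro set_eqI iffI)
  fix c assume "c \<in> paths_to_sinks (\<lambda>x y. R y x) z"
  then have "path_in R (rev c)" "hd c = z" "last c \<in> Aset R" "c \<noteq> []"
    unfolding paths_to_sinks_def Bset_converse[of R] by (auto simp: path_in_rev path_in_not_Nil)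
  then have "rev c \<in> paths_from_sources R z"
    unfolding paths_from_sources_def by (simp add: hd_rev last_rev)
  then show "c \<in> rev ` paths_from_sources R z" by (rule rev_image_eqI) simp
next
  fix c assume "c \<in> rev ` paths_from_sources R z"
  then obtain c' where c': "c = rev c'" "path_in R c'" "hd c' \<in> Aset R" "last c' = z"
    unfolding paths_from_sources_def by blast
  then show "c \<in> paths_to_sinks (\<lambda>x y. R y x) z"
    using path_in_not_Nil[OF c'(2)] path_in_rev[of "\<lambda>x y. R y x" c']
    unfolding paths_to_sinks_def Bset_converse[of R] by (simp add: hd_rev last_rev)
qed

lemma ordered_occurrences_rev:
  "(\<exists>i j. i \<le> j \<and> j < length (rev c) \<and> rev c ! i = y \<and> rev c ! j = z) \<longleftrightarrow>
   (\<exists>i j. i \<le> j \<and> j < length c \<and> c ! i = z \<and> c ! j = y)"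
proof
  assume "\<exists>i j. i \<le> j \<and> j < length (rev c) \<and> rev c ! i = y \<and> rev c ! j = z"
  then obtain i j where "i \<le> j" "j < length c" "rev c ! i = y" "rev c ! j = z" by auto
  then show "\<exists>i j. i \<le> j \<and> j < length c \<and> c ! i = z \<and> c ! j = y"
    by (intro exI[of _ "length c - 1 - j"] exI[of _ "length c - 1 - i"]) (auto simp: rev_nth)
next
  assume "\<exists>i j. i \<le> j \<and> j < length c \<and> c ! i = z \<and> c ! j = y"
  then obtain i j where "i \<le> j" "j < length c" "c ! i = z" "c ! j = y" by auto
  then show "\<exists>i j. i \<le> j \<and> j < length (rev c) \<and> rev c ! i = y \<and> rev c ! j = z"
    by (intro exI[of _ "length c - 1 - j"] exI[of _ "length c - 1 - i"]) (auto simp: rev_nth)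
qed

lemma extremal_via_converse:
  "extremal_via (\<lambda>x y. R y x) y z = rev ` extremal_via R z y"
proof (intro set_eqI iffI)
  fix c assume "c \<in> extremal_via (\<lambda>x y. R y x) y z"
  then have "rev c \<in> extremal_via R z y"
    unfolding extremal_via_def using extremal_rev[of R "rev c"] ordered_occurrences_rev[of c z y] by simp
  then show "c \<in> rev ` extremal_via R z y" by (rule rev_image_eqI) simp
next
  fix c assume "c \<in> rev ` extremal_via R z y"
  then obtain c' where "c = rev c'" "c' \<in> extremal_via R z y" by blast
  then show "c \<in> extremal_via (\<lambda>x y. R y x) y z"
    unfolding extremal_via_def using extremal_rev[of R c'] ordered_occurrences_rev[of c' y z] by simp
qed

section \<open>Path weights\<close>

lemma Cpath_singleton [simp]: "Cpath f g t [x] = f t x"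
  by (simp add: Cpath_def)

lemma Cpath_pair [simp]: "Cpath f g t [x, y] = g t x y"
  by (simp add: Cpath_def)

lemma Cpath_eq_prod:
  assumes "length c \<ge> 2"
  shows "Cpath f g t c = (\<Prod>i<length c - 1. g t (c ! i) (c ! Suc i)) / (\<Prod>j\<in>{1..length c - 2}. f t (c ! j))"
proof -
  consider "length c = 2" | "length c > 2" using assms by linarith
  then show ?thesis
  proof cases
    case 1
    then obtain x y where "c = [x, y]"
      by (metis One_nat_def Suc_1 length_0_conv length_Suc_conv)
    then show ?thesis by (simp add: Cpath_def lessThan_Suc)
  next
    case 2
    then show ?thesis by (simp add: Cpath_def Let_def numeral_2_eq_2)
  qed
qed

lemma Cpath_Cons_Cons_Cons:
  "Cpath f g t (x # y # z # r) = g t x y * Cpath f g t (y # z # r) / f t y"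
proof -
  have A: "Cpath f g t (x # y # z # r) =
    (\<Prod>i<Suc (Suc (length r)). g t ((x # y # z # r) ! i) ((x # y # z # r) ! Suc i)) /
    (\<Prod>j\<in>{1..Suc (length r)}. f t ((x # y # z # r) ! j))"
    by (subst Cpath_eq_prod) auto
  have B: "Cpath f g t (y # z # r) =
    (\<Prod>i<Suc (length r). g t ((y # z # r) ! i) ((y # z # r) ! Suc i)) /
    (\<Prod>j\<in>{1..length r}. f t ((y # z # r) ! j))"
    by (subst Cpath_eq_prod) auto
  have shift: "(\<Prod>j\<in>{1..Suc k}. \<phi> j) = \<phi> 1 * (\<Prod>j\<in>{1..k}. \<phi> (Suc j))"
    for \<phi> :: "nat \<Rightarrow> real" and k
    by (simp add: prod.atLeast_Suc_atMost prod.atLeast_Suc_atMost_Suc_shift del: prod.cl_ivl_Suc)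
  show ?thesis
    unfolding A B prod.lessThan_Suc_shift shift by simp
qed

lemma Cpath_join:
  assumes "a \<noteq> []" "b \<noteq> []" "last a = hd b"
    and nz: "length a \<ge> 2 \<Longrightarrow> length b \<ge> 2 \<Longrightarrow> f t (hd b) \<noteq> 0"
  shows "Cpath f g t (a @ tl b) * f t (hd b) = Cpath f g t a * Cpath f g t b"
  using assms
proof (induction a rule: induct_list012)
  case 1 then show ?case by simp
next
  case (2 x)
  then show ?case by (cases b) auto
next
  case (3 w v r)
  show ?case
  proof (cases r)
    case Nil
    then have v: "v = hd b" using 3 by simp
    obtain b' where b: "b = v # b'" using 3(4) v by (cases b) auto
    show ?thesis
    proof (cases b')
      case Nil then show ?thesis using b Nil by simp
    next
      case (Cons u b'')
      have "f t (hd b) \<noteq> 0" by (rule 3(6)) (use b Cons Nil in auto)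
      then have "f t v \<noteq> 0" using v by simp
      then show ?thesis using b Cons Nil by (simp add: Cpath_Cons_Cons_Cons)
    qed
  next
    case (Cons u r')
    have IH: "Cpath f g t ((v # r) @ tl b) * f t (hd b) = Cpath f g t (v # r) * Cpath f g t b"
    proof (rule 3(2))
      show "last (v # r) = hd b" using 3(5) by simp
      show "f t (hd b) \<noteq> 0" if "2 \<le> length (v # r)" "2 \<le> length b"
        using 3(6) that by simp
    qed (use 3(4) in auto)
    have e1: "(w # v # r) @ tl b = w # v # u # (r' @ tl b)" using Cons by simp
    have e2: "(v # r) @ tl b = v # u # (r' @ tl b)" using Cons by simp
    show ?thesis unfolding e1 using IH unfolding e2 Cons
      by (simp add: Cpath_Cons_Cons_Cons)
  qed
qed

lemma Cpath_rev:
  assumes "\<And>x. F2 t x = F s x" "\<And>x y. G2 t x y = G s y x"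
  shows "Cpath F2 G2 t (rev c) = Cpath F G s c"
proof -
  consider "length c = 0" | "length c = 1" | "length c \<ge> 2" by linarith
  then show ?thesis
  proof cases
    case 1 then show ?thesis using assms by (simp add: Cpath_def)
  next
    case 2
    then obtain x where "c = [x]" by (metis One_nat_def length_0_conv length_Suc_conv)
    then show ?thesis using assms by simp
  next
    case 3
    define n where "n = length c - 1"
    have n: "length c = Suc n" "n \<ge> 1" using 3 n_def by auto
    have L: "Cpath F2 G2 t (rev c) = (\<Prod>i<n. G s (c ! (n - Suc i)) (c ! (n - i))) /
        (\<Prod>j\<in>{1..n - 1}. F s (c ! (n - j)))"
    proof -
      have "Cpath F2 G2 t (rev c) = (\<Prod>i<n. G2 t (rev c ! i) (rev c ! Suc i)) /
        (\<Prod>j\<in>{1..n - 1}. F2 t (rev c ! j))"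
        using 3 n by (subst Cpath_eq_prod) auto
      also have "(\<Prod>i<n. G2 t (rev c ! i) (rev c ! Suc i)) = (\<Prod>i<n. G s (c ! (n - Suc i)) (c ! (n - i)))"
        by (rule prod.cong) (use n assms in \<open>auto simp: rev_nth Suc_diff_Suc\<close>)
      also have "(\<Prod>j\<in>{1..n - 1}. F2 t (rev c ! j)) = (\<Prod>j\<in>{1..n - 1}. F s (c ! (n - j)))"
        by (rule prod.cong) (use n assms in \<open>auto simp: rev_nth\<close>)
      finally show ?thesis .
    qed
    have R: "Cpath F G s c = (\<Prod>i<n. G s (c ! i) (c ! Suc i)) / (\<Prod>j\<in>{1..n - 1}. F s (c ! j))"
      using 3 n by (subst Cpath_eq_prod) auto
    have P1: "(\<Prod>i<n. G s (c ! (n - Suc i)) (c ! (n - i))) = (\<Prod>i<n. G s (c ! i) (c ! Suc i))"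
    proof -
      have "(\<Prod>i<n. G s (c ! i) (c ! Suc i)) = (\<Prod>i<n. G s (c ! (n - Suc i)) (c ! Suc (n - Suc i)))"
        using prod.atLeastLessThan_rev[of "\<lambda>i. G s (c ! i) (c ! Suc i)" 0 n] by (simp add: atLeast0LessThan)
      also have "\<dots> = (\<Prod>i<n. G s (c ! (n - Suc i)) (c ! (n - i)))"
        by (rule prod.cong) (auto simp: Suc_diff_Suc)
      finally show ?thesis by simp
    qed
    have P2: "(\<Prod>j\<in>{1..n - 1}. F s (c ! (n - j))) = (\<Prod>j\<in>{1..n - 1}. F s (c ! j))"
    proof -
      have "(\<Prod>j\<in>{1..n - 1}. F s (c ! (n - j))) = (\<Prod>j\<in>{1..n - 1}. F s (c ! (n - (n - 1 + 1 - j))))"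
        by (rule prod.atLeastAtMost_rev)
      also have "\<dots> = (\<Prod>j\<in>{1..n - 1}. F s (c ! j))"
        by (rule prod.cong) (use n in auto)
      finally show ?thesis .
    qed
    show ?thesis using L R P1 P2 by simp
  qed
qed

section \<open>Graph distance\<close>

locale connected_graph =
  fixes adj :: "'v \<Rightarrow> 'v \<Rightarrow> bool"
  assumes sym: "\<forall>x y. adj x y \<longrightarrow> adj y x"
    and loc_fin: "\<forall>x. finite {y. adj x y}"
    and connected: "\<forall>x y. \<exists>\<gamma>. path_in adj \<gamma> \<and> hd \<gamma> = x \<and> last \<gamma> = y"
begin

abbreviation "d \<equiv> gdist adj"

lemma gdist_le_length: "path_in adj c \<Longrightarrow> d (hd c) (last c) \<le> length c - 1"
  unfolding gdist_def by (rule Least_le) (use path_in_not_Nil in fastforce)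

lemma gdist_attained: "\<exists>c. path_in adj c \<and> hd c = x \<and> last c = y \<and> length c = Suc (d x y)"
proof -
  obtain c where c: "path_in adj c" "hd c = x" "last c = y" using connected by blast
  then have "\<exists>n c. path_in adj c \<and> hd c = x \<and> last c = y \<and> length c = Suc n"
    using path_in_not_Nil[OF c(1)] by (intro exI[of _ "length c - 1"] exI[of _ c]) auto
  from LeastI_ex[OF this] show ?thesis unfolding gdist_def by simp
qed

lemma gdist_self [simp]: "d x x = 0"
  using gdist_le_length[of "[x]"] by simp

lemma gdist_triangle: "d x z \<le> d x y + d y z"
proof -
  obtain a where a: "path_in adj a" "hd a = x" "last a = y" "length a = Suc (d x y)"
    using gdist_attained by blast
  obtain b where b: "path_in adj b" "hd b = y" "last b = z" "length b = Suc (d y z)"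
    using gdist_attained by blast
  have ne: "a \<noteq> []" "b \<noteq> []" using a b path_in_not_Nil by auto
  have "d (hd (a @ tl b)) (last (a @ tl b)) \<le> length (a @ tl b) - 1"
    using path_in_join[OF a(1) b(1)] a b by (intro gdist_le_length) simp
  then show ?thesis using a b ne last_join[OF ne] by simp
qed

lemma geodesic_edge_gdist:
  assumes g: "geodesic adj \<gamma>" and k: "Suc k < length \<gamma>"
  shows "d (hd \<gamma>) (\<gamma> ! k) \<le> k" "d (\<gamma> ! Suc k) (last \<gamma>) + k + 1 \<le> d (hd \<gamma>) (last \<gamma>)"
proof -
  have p: "path_in adj \<gamma>" and len: "length \<gamma> = Suc (d (hd \<gamma>) (last \<gamma>))"
    using g unfolding geodesic_def by auto
  note pre = path_split_at[OF p, of k] and suf = path_split_at[OF p k]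
  show "d (hd \<gamma>) (\<gamma> ! k) \<le> k"
    using gdist_le_length[OF pre(2)] pre k by simp
  show "d (\<gamma> ! Suc k) (last \<gamma>) + k + 1 \<le> d (hd \<gamma>) (last \<gamma>)"
    using gdist_le_length[OF suf(3)] suf k len by simp
qed

end

section \<open>Optimal couplings\<close>

definition supported_on :: "'v set \<Rightarrow> ('v \<Rightarrow> 'v \<Rightarrow> real) \<Rightarrow> bool" where
  "supported_on U p \<longleftrightarrow> (\<forall>x y. p x y \<noteq> 0 \<longrightarrow> x \<in> U \<and> y \<in> U)"

lemma coupling_supported_on_finite:
  assumes "coupling f0 f1 p"
  obtains U where "finite U" "supported_on U p"
proof
  let ?S = "{(x, y). p x y \<noteq> 0}"
  show "finite (fst ` ?S \<union> snd ` ?S)" using assms unfolding coupling_def by auto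
  show "supported_on (fst ` ?S \<union> snd ` ?S) p" unfolding supported_on_def by force
qed

lemma sum_nonzero_eq_sum_superset:
  "finite U \<Longrightarrow> {y. \<phi> y \<noteq> 0} \<subseteq> U \<Longrightarrow> (\<Sum>y\<in>{y. \<phi> y \<noteq> 0}. \<phi> y) = sum \<phi> U"
  by (rule sum.mono_neutral_left) auto

lemma coupling_iff_supported_on:
  assumes U: "finite U" "supported_on U p"
  shows "coupling f0 f1 p \<longleftrightarrow> (\<forall>x y. p x y \<ge> 0) \<and>
    (\<forall>x. (\<Sum>y\<in>U. p x y) = f0 x) \<and> (\<forall>y. (\<Sum>x\<in>U. p x y) = f1 y)"
proof -
  have "{(x, y). p x y \<noteq> 0} \<subseteq> U \<times> U" using U(2) by (auto simp: supported_on_def)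
  then have "finite {(x, y). p x y \<noteq> 0}" using U(1) by (simp add: finite_subset)
  moreover have "(\<Sum>y\<in>{y. p x y \<noteq> 0}. p x y) = (\<Sum>y\<in>U. p x y)" for x
    using U(2) unfolding supported_on_def by (intro sum_nonzero_eq_sum_superset[OF U(1)]) blast
  moreover have "(\<Sum>x\<in>{x. p x y \<noteq> 0}. p x y) = (\<Sum>x\<in>U. p x y)" for y
    using U(2) unfolding supported_on_def by (intro sum_nonzero_eq_sum_superset[OF U(1)]) blast
  ultimately show ?thesis unfolding coupling_def by simp
qed

lemma transport_cost_supported_on:
  assumes "finite U" "supported_on U p"
  shows "transport_cost adj p = (\<Sum>(x, y)\<in>U \<times> U. real (gdist adj x y) * p x y)"
proof -
  have "{(x, y). p x y \<noteq> 0} \<subseteq> U \<times> U" using assms(2) by (auto simp: supported_on_def)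
  with assms(1) show ?thesis
    unfolding transport_cost_def by (intro sum.mono_neutral_left) auto
qed

lemma W1_le_transport_cost:
  assumes "coupling f0 f1 p"
  shows "W1 adj f0 f1 \<le> transport_cost adj p"
  unfolding W1_def
proof (rule cInf_lower)
  show "transport_cost adj p \<in> transport_cost adj ` {p. coupling f0 f1 p}"
    using assms by blast
  have "transport_cost adj q \<ge> 0" if "coupling f0 f1 q" for q
    using that unfolding coupling_def transport_cost_def by (intro sum_nonneg) auto
  then show "bdd_below (transport_cost adj ` {p. coupling f0 f1 p})"
    by (intro bdd_belowI[of _ 0]) auto
qed

lemma mean_of_optimal_couplings:
  fixes P :: "nat \<Rightarrow> 'v \<Rightarrow> 'v \<Rightarrow> real"
  assumes L: "L > 0" and opt: "\<And>i. i < L \<Longrightarrow> P i \<in> opt_couplings adj f0 f1"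
    and U: "finite U" "\<And>i. i < L \<Longrightarrow> supported_on U (P i)"
  shows "(\<lambda>x y. (\<Sum>i<L. P i x y) / real L) \<in> opt_couplings adj f0 f1"
proof -
  define Q where "Q x y = (\<Sum>i<L. P i x y) / real L" for x y
  have cp: "coupling f0 f1 (P i)" if "i < L" for i
    using opt[OF that] unfolding opt_couplings_def by auto
  have marg: "(\<forall>x y. P i x y \<ge> 0) \<and> (\<forall>x. (\<Sum>y\<in>U. P i x y) = f0 x) \<and> (\<forall>y. (\<Sum>x\<in>U. P i x y) = f1 y)"
    if "i < L" for i
    using cp[OF that] coupling_iff_supported_on[OF U(1) U(2)[OF that]] by blast
  have su: "supported_on U Q"
    using U(2) unfolding supported_on_def Q_def by (metis div_0 lessThan_iff sum.neutral)
  have "coupling f0 f1 Q"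
    unfolding coupling_iff_supported_on[OF U(1) su]
  proof (intro conjI allI)
    fix x y
    show "Q x y \<ge> 0" using marg unfolding Q_def by (auto intro!: divide_nonneg_nonneg sum_nonneg)
  next
    fix x
    have "(\<Sum>y\<in>U. Q x y) = (\<Sum>i<L. \<Sum>y\<in>U. P i x y) / real L"
      unfolding Q_def by (simp add: sum_divide_distrib[symmetric] sum.swap[of _ U])
    also have "\<dots> = (\<Sum>i<L. f0 x) / real L"
      using marg by (intro arg_cong[where f = "\<lambda>s. s / real L"] sum.cong) auto
    finally show "(\<Sum>y\<in>U. Q x y) = f0 x" using L by simp
  next
    fix y
    have "(\<Sum>x\<in>U. Q x y) = (\<Sum>i<L. \<Sum>x\<in>U. P i x y) / real L"
      unfolding Q_def by (simp add: sum_divide_distrib[symmetric] sum.swap[of _ U])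
    also have "\<dots> = (\<Sum>i<L. f1 y) / real L"
      using marg by (intro arg_cong[where f = "\<lambda>s. s / real L"] sum.cong) auto
    finally show "(\<Sum>x\<in>U. Q x y) = f1 y" using L by simp
  qed
  moreover have "transport_cost adj Q = (\<Sum>i<L. transport_cost adj (P i)) / real L"
  proof -
    have "transport_cost adj Q = (\<Sum>i<L. \<Sum>(x, y)\<in>U \<times> U. real (gdist adj x y) * P i x y) / real L"
      unfolding transport_cost_supported_on[OF U(1) su] Q_def
      by (simp add: sum_divide_distrib[symmetric] sum_distrib_left sum.swap[of _ "U \<times> U"]
          case_prod_beta)
    also have "\<dots> = (\<Sum>i<L. transport_cost adj (P i)) / real L"
      using transport_cost_supported_on[OF U(1) U(2)] by simp
    finally show ?thesis .
  qed
  then have "transport_cost adj Q = W1 adj f0 f1"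
    using opt L unfolding opt_couplings_def by simp
  ultimately show ?thesis unfolding opt_couplings_def Q_def by simp
qed

lemma Cset_common_optimal_coupling:
  fixes L :: nat
  assumes L: "L > 0" and C: "\<And>i. i < L \<Longrightarrow> (xs i, ys i) \<in> Cset adj f0 f1"
  obtains \<pi> where "\<pi> \<in> opt_couplings adj f0 f1" "\<And>i. i < L \<Longrightarrow> \<pi> (xs i) (ys i) > 0"
proof -
  have "\<forall>i\<in>{..<L}. \<exists>p. p \<in> opt_couplings adj f0 f1 \<and> p (xs i) (ys i) > 0"
    using C unfolding Cset_def by auto
  from bchoice[OF this] obtain P
    where P: "\<And>i. i < L \<Longrightarrow> P i \<in> opt_couplings adj f0 f1 \<and> P i (xs i) (ys i) > 0"
    by auto
  have "\<forall>i\<in>{..<L}. \<exists>U. finite U \<and> supported_on U (P i)"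
  proof
    fix i assume "i \<in> {..<L}"
    then have "coupling f0 f1 (P i)" using P unfolding opt_couplings_def by auto
    then show "\<exists>U. finite U \<and> supported_on U (P i)"
      by (elim coupling_supported_on_finite) blast
  qed
  from bchoice[OF this] obtain U
    where U: "\<And>i. i < L \<Longrightarrow> finite (U i) \<and> supported_on (U i) (P i)"
    by auto
  have "supported_on (\<Union>i<L. U i) (P i)" if "i < L" for i
    using U[OF that] that unfolding supported_on_def by blast
  then have opt: "(\<lambda>x y. (\<Sum>i<L. P i x y) / real L) \<in> opt_couplings adj f0 f1"
    using L P U by (intro mean_of_optimal_couplings[where U = "\<Union>i<L. U i"]) auto
  have "(\<Sum>j<L. P j (xs i) (ys i)) / real L > 0" if "i < L" for i
  proof -
    have "\<forall>j<L. P j (xs i) (ys i) \<ge> 0"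
      using P unfolding opt_couplings_def coupling_def by auto
    then have "P i (xs i) (ys i) \<le> (\<Sum>j<L. P j (xs i) (ys i))"
      using that by (intro member_le_sum) auto
    then show ?thesis using P[OF that] L by simp
  qed
  with opt show thesis by (rule that)
qed

definition pair_count :: "nat \<Rightarrow> (nat \<Rightarrow> 'v) \<Rightarrow> (nat \<Rightarrow> 'v) \<Rightarrow> 'v \<Rightarrow> 'v \<Rightarrow> real" where
  "pair_count L xs ys x y = (\<Sum>i<L. of_bool (xs i = x \<and> ys i = y))"

lemma pair_count_nonneg: "pair_count L xs ys x y \<ge> 0"
  unfolding pair_count_def by (intro sum_nonneg) simp

lemma pair_count_le: "pair_count L xs ys x y \<le> real L"
proof -
  have "pair_count L xs ys x y \<le> (\<Sum>i<L. 1)"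
    unfolding pair_count_def by (intro sum_mono) simp
  then show ?thesis by simp
qed

lemma pair_count_neq_0: "pair_count L xs ys x y \<noteq> 0 \<Longrightarrow> \<exists>i<L. xs i = x \<and> ys i = y"
  unfolding pair_count_def by (metis (mono_tags, lifting) lessThan_iff of_bool_eq_0_iff sum.neutral)

lemma supported_on_pair_count:
  "(\<And>i. i < L \<Longrightarrow> xs i \<in> U \<and> ys i \<in> U) \<Longrightarrow> supported_on U (pair_count L xs ys)"
  unfolding supported_on_def by (metis pair_count_neq_0)

lemma sum_of_bool_eq_single:
  assumes "finite U" "u \<in> U"
  shows "(\<Sum>y\<in>U. of_bool (P \<and> u = y)) = (of_bool P :: real)"
    and "(\<Sum>y\<in>U. of_bool (u = y \<and> P)) = (of_bool P :: real)"
  using assms by (simp_all add: sum.delta)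

lemma sum_pair_count_snd:
  assumes "finite U" "\<And>i. i < L \<Longrightarrow> ys i \<in> U"
  shows "(\<Sum>y\<in>U. pair_count L xs ys x y) = (\<Sum>i<L. of_bool (xs i = x))"
proof -
  have "(\<Sum>y\<in>U. pair_count L xs ys x y) = (\<Sum>i<L. \<Sum>y\<in>U. of_bool (xs i = x \<and> ys i = y))"
    unfolding pair_count_def by (rule sum.swap)
  also have "\<dots> = (\<Sum>i<L. of_bool (xs i = x))"
    using assms by (intro sum.cong refl sum_of_bool_eq_single) auto
  finally show ?thesis .
qed

lemma sum_pair_count_fst:
  assumes "finite U" "\<And>i. i < L \<Longrightarrow> xs i \<in> U"
  shows "(\<Sum>x\<in>U. pair_count L xs ys x y) = (\<Sum>i<L. of_bool (ys i = y))"
proof -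
  have "(\<Sum>x\<in>U. pair_count L xs ys x y) = (\<Sum>i<L. \<Sum>x\<in>U. of_bool (xs i = x \<and> ys i = y))"
    unfolding pair_count_def by (rule sum.swap)
  also have "\<dots> = (\<Sum>i<L. of_bool (ys i = y))"
    using assms by (intro sum.cong refl sum_of_bool_eq_single) auto
  finally show ?thesis .
qed

lemma sum_weighted_pair_count:
  assumes "finite U" "\<And>i. i < L \<Longrightarrow> xs i \<in> U \<and> ys i \<in> U"
  shows "(\<Sum>(x, y)\<in>U \<times> U. D x y * pair_count L xs ys x y) = (\<Sum>i<L. D (xs i) (ys i))"
proof -
  have "D (fst z) (snd z) * pair_count L xs ys (fst z) (snd z) =
      (\<Sum>i<L. if z = (xs i, ys i) then D (fst z) (snd z) else 0)" for z
    unfolding pair_count_def sum_distrib_left by (intro sum.cong) auto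
  then have "(\<Sum>(x, y)\<in>U \<times> U. D x y * pair_count L xs ys x y) =
        (\<Sum>z\<in>U \<times> U. \<Sum>i<L. if z = (xs i, ys i) then D (fst z) (snd z) else 0)"
    by (intro sum.cong refl) (metis (no_types, lifting) split_beta)
  also have "\<dots> = (\<Sum>i<L. \<Sum>z\<in>U \<times> U. if z = (xs i, ys i) then D (fst z) (snd z) else 0)"
    by (rule sum.swap)
  also have "\<dots> = (\<Sum>i<L. D (xs i) (ys i))"
    using assms by (intro sum.cong refl) (simp add: sum.delta)
  finally show ?thesis .
qed

lemma supported_on_perturb:
  assumes "supported_on U p" "supported_on U \<mu>" "supported_on U \<nu>"
  shows "supported_on U (\<lambda>x y. p x y + e * (\<mu> x y - \<nu> x y))"
  unfolding supported_on_def
proof (intro allI impI)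
  fix x y assume "p x y + e * (\<mu> x y - \<nu> x y) \<noteq> 0"
  then have "p x y \<noteq> 0 \<or> \<mu> x y \<noteq> 0 \<or> \<nu> x y \<noteq> 0" by auto
  then show "x \<in> U \<and> y \<in> U" using assms unfolding supported_on_def by blast
qed

lemma coupling_perturb:
  assumes p: "coupling f0 f1 p" and U: "finite U" "supported_on U p"
    and supp: "supported_on U \<mu>" "supported_on U \<nu>"
    and rows: "\<And>x. (\<Sum>y\<in>U. \<mu> x y) = (\<Sum>y\<in>U. \<nu> x y)"
    and cols: "\<And>y. (\<Sum>x\<in>U. \<mu> x y) = (\<Sum>x\<in>U. \<nu> x y)"
    and nonneg: "\<And>x y. p x y + e * (\<mu> x y - \<nu> x y) \<ge> 0"
  shows "coupling f0 f1 (\<lambda>x y. p x y + e * (\<mu> x y - \<nu> x y))"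
proof -
  have su: "supported_on U (\<lambda>x y. p x y + e * (\<mu> x y - \<nu> x y))"
    using supported_on_perturb[OF U(2) supp] .
  show ?thesis
    using p rows cols nonneg
    unfolding coupling_iff_supported_on[OF U] coupling_iff_supported_on[OF U(1) su]
    by (simp add: sum.distrib sum_subtractf sum_distrib_left[symmetric])
qed

lemma transport_cost_perturb:
  assumes U: "finite U" "supported_on U p" and supp: "supported_on U \<mu>" "supported_on U \<nu>"
  shows "transport_cost adj (\<lambda>x y. p x y + e * (\<mu> x y - \<nu> x y)) = transport_cost adj p +
    e * ((\<Sum>(x, y)\<in>U \<times> U. real (gdist adj x y) * \<mu> x y) - (\<Sum>(x, y)\<in>U \<times> U. real (gdist adj x y) * \<nu> x y))"
  unfolding transport_cost_supported_on[OF U(1) supported_on_perturb[OF U(2) supp]]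
    transport_cost_supported_on[OF U]
  by (simp add: case_prod_beta algebra_simps sum.distrib sum_subtractf sum_distrib_left)

lemma pair_count_reindex_marginals:
  assumes U: "finite U" and inU: "\<And>i. i < L \<Longrightarrow> xs i \<in> U \<and> ys i \<in> U"
    and s: "bij_betw s {..<L} {..<L}"
  shows "(\<Sum>y\<in>U. pair_count L (\<lambda>i. xs (s i)) ys x y) = (\<Sum>y\<in>U. pair_count L xs ys x y)"
    and "(\<Sum>x\<in>U. pair_count L (\<lambda>i. xs (s i)) ys x y) = (\<Sum>x\<in>U. pair_count L xs ys x y)"
proof -
  have "xs (s i) \<in> U" if "i < L" for i using inU bij_betwE[OF s] that by blast
  then show "(\<Sum>x\<in>U. pair_count L (\<lambda>i. xs (s i)) ys x y) = (\<Sum>x\<in>U. pair_count L xs ys x y)"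
    using inU by (simp add: sum_pair_count_fst[OF U])
  have ys: "ys i \<in> U" if "i < L" for i using inU that by blast
  have "(\<Sum>y\<in>U. pair_count L (\<lambda>i. xs (s i)) ys x y) = (\<Sum>i<L. of_bool (xs (s i) = x))"
    by (rule sum_pair_count_snd[OF U ys])
  also have "\<dots> = (\<Sum>i<L. of_bool (xs i = x))" by (rule sum.reindex_bij_betw[OF s])
  also have "\<dots> = (\<Sum>y\<in>U. pair_count L xs ys x y)" by (rule sum_pair_count_snd[OF U ys, symmetric])
  finally show "(\<Sum>y\<in>U. pair_count L (\<lambda>i. xs (s i)) ys x y) = (\<Sum>y\<in>U. pair_count L xs ys x y)" .
qed

lemma perturb_pair_count_nonneg:
  assumes p: "\<And>x y. p x y \<ge> 0" and e: "e \<ge> 0" and small: "\<And>i. i < L \<Longrightarrow> e * real L \<le> p (xs i) (ys i)"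
  shows "p x y + e * (pair_count L xs' ys x y - pair_count L xs ys x y) \<ge> 0"
proof -
  have "e * pair_count L xs ys x y \<le> p x y"
  proof (cases "pair_count L xs ys x y = 0")
    case False
    then obtain i where "i < L" "xs i = x" "ys i = y" by (metis pair_count_neq_0)
    then show ?thesis
      using small e pair_count_le[of L xs ys x y] by (metis mult_left_mono order_trans)
  qed (simp add: p)
  moreover have "e * pair_count L xs' ys x y \<ge> 0" using e pair_count_nonneg[of L xs' ys x y] by simp
  ultimately show ?thesis by (simp add: algebra_simps)
qed

text \<open>Otherwise shifting a little mass along the cycle would lower the transport cost.\<close>
lemma optimal_coupling_cyclically_monotone:
  fixes xs ys :: "nat \<Rightarrow> 'v"
  assumes opt: "\<pi> \<in> opt_couplings adj f0 f1"
    and pos: "\<And>i. i < L \<Longrightarrow> \<pi> (xs i) (ys i) > 0"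
    and s: "bij_betw s {..<L} {..<L}"
  shows "(\<Sum>i<L. real (gdist adj (xs i) (ys i))) \<le> (\<Sum>i<L. real (gdist adj (xs (s i)) (ys i)))"
proof (rule ccontr)
  let ?D = "\<lambda>x y. real (gdist adj x y)"
  assume less: "\<not> ?thesis"
  then have L: "L > 0" by (cases L) auto
  have cp: "coupling f0 f1 \<pi>" and cost: "transport_cost adj \<pi> = W1 adj f0 f1"
    using opt unfolding opt_couplings_def by auto
  obtain U where U: "finite U" "supported_on U \<pi>"
    using coupling_supported_on_finite[OF cp] .
  have inU: "xs i \<in> U \<and> ys i \<in> U" if "i < L" for i
    using pos[OF that] U(2) unfolding supported_on_def by (metis less_irrefl)
  have inU_s: "xs (s i) \<in> U \<and> ys i \<in> U" if "i < L" for i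
    using inU that bij_betwE[OF s] by blast
  define m where "m = Min ((\<lambda>i. \<pi> (xs i) (ys i)) ` {..<L})"
  have m: "m > 0" "\<And>i. i < L \<Longrightarrow> m \<le> \<pi> (xs i) (ys i)"
    unfolding m_def using pos L by (subst Min_gr_iff; auto) (intro Min_le; auto)
  define e where "e = m / real L"
  have e: "e > 0" "\<And>i. i < L \<Longrightarrow> e * real L \<le> \<pi> (xs i) (ys i)"
    using m L unfolding e_def by auto
  define \<mu> where "\<mu> = pair_count L (\<lambda>i. xs (s i)) ys"
  define \<nu> where "\<nu> = pair_count L xs ys"
  have supp: "supported_on U \<mu>" "supported_on U \<nu>"
    unfolding \<mu>_def \<nu>_def using inU inU_s by (auto intro!: supported_on_pair_count)
  define q where "q = (\<lambda>x y. \<pi> x y + e * (\<mu> x y - \<nu> x y))"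
  have "coupling f0 f1 q"
    using cp e unfolding q_def unfolding \<mu>_def \<nu>_def coupling_def[of f0 f1 \<pi>]
    by (intro coupling_perturb[OF cp U supp[unfolded \<mu>_def \<nu>_def]] pair_count_reindex_marginals[OF U(1) inU s]
        perturb_pair_count_nonneg) auto
  moreover have "transport_cost adj q = transport_cost adj \<pi> +
      e * ((\<Sum>i<L. ?D (xs (s i)) (ys i)) - (\<Sum>i<L. ?D (xs i) (ys i)))"
    unfolding q_def transport_cost_perturb[OF U supp]
    by (simp only: \<mu>_def \<nu>_def sum_weighted_pair_count[OF U(1) inU_s] sum_weighted_pair_count[OF U(1) inU])
  moreover have "e * ((\<Sum>i<L. ?D (xs (s i)) (ys i)) - (\<Sum>i<L. ?D (xs i) (ys i))) < 0"
    using less e by (intro mult_pos_neg) auto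
  ultimately show False
    using W1_le_transport_cost[of f0 f1 q adj] cost by linarith
qed

section \<open>Oriented paths are geodesics\<close>

lemma bij_betw_rotate:
  "bij_betw (\<lambda>i. if Suc i = L then 0 else Suc i) {..<L} {..<(L::nat)}"
  by (rule bij_betw_byWitness[where f' = "\<lambda>j. if j = 0 then L - 1 else j - 1"]) auto

lemma Cset_marginals_pos:
  assumes "(x, y) \<in> Cset adj f0 f1"
  shows "f0 x > 0" "f1 y > 0"
proof -
  obtain \<pi> where \<pi>: "coupling f0 f1 \<pi>" "\<pi> x y > 0"
    using assms unfolding Cset_def opt_couplings_def by auto
  obtain U where U: "finite U" "supported_on U \<pi>" using coupling_supported_on_finite[OF \<pi>(1)] .
  have marg: "(\<forall>x y. \<pi> x y \<ge> 0) \<and> (\<forall>x. (\<Sum>y\<in>U. \<pi> x y) = f0 x) \<and> (\<forall>y. (\<Sum>x\<in>U. \<pi> x y) = f1 y)"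
    using \<pi>(1) coupling_iff_supported_on[OF U] by blast
  have xy: "x \<in> U" "y \<in> U" using \<pi>(2) U(2) unfolding supported_on_def by (metis less_irrefl)+
  have "\<pi> x y \<le> (\<Sum>y\<in>U. \<pi> x y)" "\<pi> x y \<le> (\<Sum>x\<in>U. \<pi> x y)"
    using marg xy U(1) by (intro member_le_sum; simp)+
  then show "f0 x > 0" "f1 y > 0" using marg \<pi>(2) by simp_all
qed

context connected_graph
begin

lemma orient_adj: "orient adj f0 f1 x y \<Longrightarrow> adj x y"
  unfolding orient_def by simp

lemma geodesics_edges_gdist:
  assumes "geodesic adj \<gamma>" "Suc k < length \<gamma>" "geodesic adj \<gamma>'" "Suc k' < length \<gamma>'"
  shows "d (hd \<gamma>') (last \<gamma>) + k + 1 \<le> k' + d (\<gamma>' ! k') (\<gamma> ! Suc k) + d (hd \<gamma>) (last \<gamma>)"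
proof -
  have "d (hd \<gamma>') (last \<gamma>) \<le> d (hd \<gamma>') (\<gamma>' ! k') + d (\<gamma>' ! k') (\<gamma> ! Suc k) + d (\<gamma> ! Suc k) (last \<gamma>)"
    using gdist_triangle[where x = "hd \<gamma>'" and y = "\<gamma>' ! k'" and z = "last \<gamma>"]
      gdist_triangle[where x = "\<gamma>' ! k'" and y = "\<gamma> ! Suc k" and z = "last \<gamma>"]
    by linarith
  then show ?thesis
    using geodesic_edge_gdist[OF assms(1,2)] geodesic_edge_gdist[OF assms(3,4)] by linarith
qed

text \<open>Each edge \<open>c\<^sub>i \<rightarrow> c\<^sub>i\<^sub>+\<^sub>1\<close> lies on a geodesic between
  a transport pair \<open>(x\<^sub>i, y\<^sub>i)\<close>; cyclic monotonicity for the rotated pairs \<open>(x\<^sub>i\<^sub>+\<^sub>1, y\<^sub>i)\<close>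
  then bounds the number of edges by \<open>d(c\<^sub>0, c\<^sub>L)\<close>.\<close>
lemma orient_path_length:
  assumes p: "path_in (orient adj f0 f1) c"
  shows "length c = Suc (d (hd c) (last c))"
proof -
  define L where "L = length c - 1"
  have ne: "c \<noteq> []" using path_in_not_Nil[OF p] .
  have len: "length c = Suc L" and hd_last: "hd c = c ! 0" "last c = c ! L"
    using ne unfolding L_def by (auto simp: hd_conv_nth last_conv_nth)
  have "d (hd c) (last c) \<le> L"
    using gdist_le_length[OF path_in_mono[OF p orient_adj]] unfolding L_def by simp
  moreover have "L \<le> d (c ! 0) (c ! L)"
  proof (cases "L = 0")
    case False
    then have L: "L > 0" by simp
    have "\<forall>i<L. \<exists>\<gamma> k. geodesic adj \<gamma> \<and> (hd \<gamma>, last \<gamma>) \<in> Cset adj f0 f1 \<and> Suc k < length \<gamma>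
        \<and> \<gamma> ! k = c ! i \<and> \<gamma> ! Suc k = c ! Suc i"
      using p len unfolding path_in_def orient_def by auto
    then obtain \<Gamma> K where \<Gamma>: "\<And>i. i < L \<Longrightarrow> geodesic adj (\<Gamma> i) \<and>
        (hd (\<Gamma> i), last (\<Gamma> i)) \<in> Cset adj f0 f1 \<and> Suc (K i) < length (\<Gamma> i) \<and>
        \<Gamma> i ! K i = c ! i \<and> \<Gamma> i ! Suc (K i) = c ! Suc i"
      by metis
    define s where "s i = (if Suc i = L then 0 else Suc i)" for i
    have s: "bij_betw s {..<L} {..<L}" unfolding s_def by (rule bij_betw_rotate)
    then have sL: "s i < L" if "i < L" for i using that bij_betwE by blast
    obtain \<pi> where "\<pi> \<in> opt_couplings adj f0 f1" "\<And>i. i < L \<Longrightarrow> \<pi> (hd (\<Gamma> i)) (last (\<Gamma> i)) > 0"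
      using Cset_common_optimal_coupling[OF L, of "\<lambda>i. hd (\<Gamma> i)" "\<lambda>i. last (\<Gamma> i)"] \<Gamma> by blast
    from optimal_coupling_cyclically_monotone[OF this s]
    have cm: "(\<Sum>i<L. d (hd (\<Gamma> i)) (last (\<Gamma> i))) \<le> (\<Sum>i<L. d (hd (\<Gamma> (s i))) (last (\<Gamma> i)))"
      by (simp only: of_nat_sum[symmetric] of_nat_le_iff)
    have "d (hd (\<Gamma> (s i))) (last (\<Gamma> i)) + K i + 1 \<le>
        K (s i) + d (c ! s i) (c ! Suc i) + d (hd (\<Gamma> i)) (last (\<Gamma> i))" if "i < L" for i
      using geodesics_edges_gdist[of "\<Gamma> i" "K i" "\<Gamma> (s i)" "K (s i)"] \<Gamma>[OF that] \<Gamma>[OF sL[OF that]]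
      by simp
    then have "(\<Sum>i<L. d (hd (\<Gamma> (s i))) (last (\<Gamma> i))) + (\<Sum>i<L. K i) + (\<Sum>i<L. 1) \<le>
        (\<Sum>i<L. K (s i)) + (\<Sum>i<L. d (c ! s i) (c ! Suc i)) + (\<Sum>i<L. d (hd (\<Gamma> i)) (last (\<Gamma> i)))"
      unfolding sum.distrib[symmetric] by (intro sum_mono) simp
    moreover have "(\<Sum>i<L. K (s i)) = (\<Sum>i<L. K i)" by (rule sum.reindex_bij_betw[OF s])
    moreover have "(\<Sum>i<L. d (c ! s i) (c ! Suc i)) = d (c ! 0) (c ! L)"
    proof -
      obtain L' where L': "L = Suc L'" using L by (cases L) auto
      have "(\<Sum>i<L'. d (c ! s i) (c ! Suc i)) = 0" unfolding s_def L' by simp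
      then show ?thesis unfolding L' sum.lessThan_Suc by (simp add: s_def L')
    qed
    ultimately show ?thesis using cm by simp
  qed simp
  ultimately show ?thesis using len hd_last by simp
qed

lemma orient_vertices_finite:
  assumes "prob_dist f0" "prob_dist f1"
  shows "finite {x. \<exists>y. orient adj f0 f1 x y \<or> orient adj f0 f1 y x}"
proof -
  define S where "S = {x. f0 x \<noteq> 0} \<times> {x. f1 x \<noteq> 0}"
  define P where "P xy = {c. path_in adj c \<and> hd c = fst xy \<and> length c \<le> Suc (d (fst xy) (snd xy))}" for xy
  have "finite S" using assms unfolding S_def prob_dist_def by auto
  moreover have "finite (P xy)" for xy
    unfolding P_def by (rule finite_paths_bounded_length) (use loc_fin in auto)
  moreover have "{x. \<exists>y. orient adj f0 f1 x y \<or> orient adj f0 f1 y x} \<subseteq> (\<Union>xy\<in>S. \<Union>c\<in>P xy. set c)"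
  proof
    fix x assume "x \<in> {x. \<exists>y. orient adj f0 f1 x y \<or> orient adj f0 f1 y x}"
    then obtain c k where c: "geodesic adj c" "(hd c, last c) \<in> Cset adj f0 f1" "Suc k < length c"
      "c ! k = x \<or> c ! Suc k = x" unfolding orient_def by blast
    then have "x \<in> set c" by (metis Suc_lessD nth_mem)
    moreover have "(hd c, last c) \<in> S" using Cset_marginals_pos[OF c(2)] unfolding S_def by auto
    moreover have "c \<in> P (hd c, last c)" using c(1) unfolding P_def geodesic_def by auto
    ultimately show "x \<in> (\<Union>xy\<in>S. \<Union>c\<in>P xy. set c)" by blast
  qed
  ultimately show ?thesis by (meson finite_UN_I finite_set finite_subset)
qed

lemma orient_path_length_bounded:
  assumes "prob_dist f0" "prob_dist f1"
  obtains N where "\<And>c. path_in (orient adj f0 f1) c \<Longrightarrow> length c \<le> N"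
proof
  define V where "V = {x. \<exists>y. orient adj f0 f1 x y \<or> orient adj f0 f1 y x}"
  have fin: "finite ((\<lambda>(u, v). d u v) ` (V \<times> V))"
    using orient_vertices_finite[OF assms] unfolding V_def by simp
  fix c assume p: "path_in (orient adj f0 f1) c"
  show "length c \<le> Suc (Suc (Max ((\<lambda>(u, v). d u v) ` (V \<times> V))))"
  proof (cases "length c \<ge> 2")
    case True
    then have "hd c \<in> V" "last c \<in> V"
      using path_in_first_last_edge[OF p] unfolding V_def by blast+
    then have "d (hd c) (last c) \<le> Max ((\<lambda>(u, v). d u v) ` (V \<times> V))"
      using fin by (intro Max_ge) auto
    then show ?thesis using orient_path_length[OF p] by simp
  qed simp
qed

end

section \<open>The continuity equation along paths\<close>

text \<open>The data of a \<open>W\<^sub>1\<^sub>,\<^sub>+\<close>-geodesic on an orientation \<open>r\<close> whose oriented paths are geodesics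
  (for the distance \<open>\<delta>\<close>) of bounded length.\<close>
locale oriented_flow =
  fixes r :: "'v \<Rightarrow> 'v \<Rightarrow> bool" and F :: "real \<Rightarrow> 'v \<Rightarrow> real"
    and G :: "real \<Rightarrow> 'v \<Rightarrow> 'v \<Rightarrow> real" and H :: "real \<Rightarrow> 'v \<Rightarrow> 'v \<Rightarrow> 'v \<Rightarrow> real"
    and \<delta> :: "'v \<Rightarrow> 'v \<Rightarrow> nat" and N :: nat
  assumes finite_succ: "\<And>x. finite {y. r x y}" and finite_pred: "\<And>x. finite {y. r y x}"
    and path_length: "\<And>c. path_in r c \<Longrightarrow> length c = Suc (\<delta> (hd c) (last c))"
    and path_length_le: "\<And>c. path_in r c \<Longrightarrow> length c \<le> N"
    and F_deriv: "\<And>x t. t \<in> {0..1} \<Longrightarrow>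
      ((\<lambda>s. F s x) has_real_derivative (- div_g r (G t) x)) (at t within {0..1})"
    and G_deriv: "\<And>x y t. r x y \<Longrightarrow> t \<in> {0..1} \<Longrightarrow>
      ((\<lambda>s. G s x y) has_real_derivative (- div_h r (H t) x y)) (at t within {0..1})"
    and G_pos: "\<And>x y t. r x y \<Longrightarrow> t \<in> {0..1} \<Longrightarrow> G t x y > 0"
    and F_H_eq: "\<And>x y z t. r x y \<Longrightarrow> r y z \<Longrightarrow> t \<in> {0..1} \<Longrightarrow>
      F t y * H t x y z = G t x y * G t y z"
    and F_nonneg: "\<And>x t. t \<in> {0..1} \<Longrightarrow> F t x \<ge> 0"
begin

abbreviation C :: "real \<Rightarrow> 'v list \<Rightarrow> real" where
  "C t c \<equiv> Cpath F G t c"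

lemma F_pos: "r x y \<Longrightarrow> r y z \<Longrightarrow> t \<in> {0..1} \<Longrightarrow> F t y > 0"
  using F_H_eq[of x y z t] G_pos[of x y t] G_pos[of y z t] F_nonneg[of t y]
  by (metis less_eq_real_def mult_eq_0_iff mult_pos_pos)

lemma H_eq: "r x y \<Longrightarrow> r y z \<Longrightarrow> t \<in> {0..1} \<Longrightarrow> H t x y z = G t x y * G t y z / F t y"
  using F_H_eq F_pos by (metis less_irrefl nonzero_eq_divide_eq mult.commute)

definition inflow :: "real \<Rightarrow> 'v list \<Rightarrow> real" where
  "inflow t c = (\<Sum>w\<in>{w. r w (hd c)}. C t (w # c))"

definition outflow :: "real \<Rightarrow> 'v list \<Rightarrow> real" where
  "outflow t c = (\<Sum>u\<in>{u. r (last c) u}. C t (c @ [u]))"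

lemma inflow_Cons:
  assumes "c \<noteq> []"
  shows "inflow t (y # c) = inflow t [y] * C t (y # c) / F t y"
  using assms unfolding inflow_def sum_distrib_right sum_divide_distrib
  by (intro sum.cong) (auto simp: neq_Nil_conv Cpath_Cons_Cons_Cons)

lemma outflow_Cons_Cons: "outflow t (x # y # c) = G t x y * outflow t (y # c) / F t y"
  unfolding outflow_def sum_distrib_left sum_divide_distrib
  by (intro sum.cong) (cases c; simp add: Cpath_Cons_Cons_Cons)+

lemma neg_div_g_eq: "- div_g r (G t) x = inflow t [x] - outflow t [x]"
  unfolding div_g_def inflow_def outflow_def fwd_def bwd_def by simp

lemma neg_div_h_eq:
  assumes "r x y" "t \<in> {0..1}"
  shows "- div_h r (H t) x y = inflow t [x, y] - outflow t [x, y]"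
proof -
  have "(\<Sum>w\<in>{w. r w x}. H t w x y) = inflow t [x, y]"
    unfolding inflow_def using assms by (intro sum.cong) (auto simp: H_eq Cpath_Cons_Cons_Cons)
  moreover have "(\<Sum>u\<in>{u. r y u}. H t x y u) = outflow t [x, y]"
    unfolding outflow_def using assms by (intro sum.cong) (auto simp: H_eq Cpath_Cons_Cons_Cons)
  ultimately show ?thesis unfolding div_h_def fwd_def bwd_def by simp
qed

text \<open>The continuity equations for \<open>f\<close> and \<open>g\<close> propagate to all oriented paths.\<close>
lemma has_derivative_Cpath:
  "path_in r c \<Longrightarrow> t \<in> {0..1} \<Longrightarrow>
   ((\<lambda>s. C s c) has_real_derivative (inflow t c - outflow t c)) (at t within {0..1})"
proof (induction c rule: induct_list012)
  case (2 x)
  then show ?case using F_deriv[of t x] neg_div_g_eq[of t x] by simp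
next
  case (3 x y zs)
  have xy: "r x y" and p: "path_in r (y # zs)" using "3.prems" by auto
  show ?case
  proof (cases zs)
    case Nil
    then show ?thesis using G_deriv[OF xy "3.prems"(2)] neg_div_h_eq[OF xy "3.prems"(2)] by simp
  next
    case (Cons z zs')
    have Fy: "F t y \<noteq> 0" using F_pos[of x y z t] xy p "3.prems"(2) Cons by simp
    have deriv: "((\<lambda>s. G s x y * C s (y # zs) / F s y) has_real_derivative
        ((- div_h r (H t) x y * C t (y # zs) + (inflow t (y # zs) - outflow t (y # zs)) * G t x y) * F t y
         - G t x y * C t (y # zs) * (- div_g r (G t) y)) / (F t y * F t y)) (at t within {0..1})"
      using Fy by (intro DERIV_divide DERIV_mult G_deriv[OF xy "3.prems"(2)] "3.IH"(2)[OF p "3.prems"(2)]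
          F_deriv "3.prems"(2))
    have C_Cons: "(\<lambda>s. G s x y * C s (y # zs) / F s y) = (\<lambda>s. C s (x # y # zs))"
      by (simp add: Cons Cpath_Cons_Cons_Cons)
    have in_xy: "inflow t (x # y # zs) = inflow t [x, y] * C t (y # zs) / F t y"
      using inflow_Cons[of "y # zs" t x] inflow_Cons[of "[y]" t x] Cons
      by (simp add: Cpath_Cons_Cons_Cons ac_simps)
    have in_y: "inflow t (y # zs) = inflow t [y] * C t (y # zs) / F t y"
      using Cons by (intro inflow_Cons) simp
    have "((- div_h r (H t) x y * C t (y # zs) + (inflow t (y # zs) - outflow t (y # zs)) * G t x y)
         * F t y - G t x y * C t (y # zs) * (- div_g r (G t) y)) / (F t y * F t y)
        = inflow t (x # y # zs) - outflow t (x # y # zs)"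
      unfolding neg_div_h_eq[OF xy "3.prems"(2)] neg_div_g_eq outflow_Cons_Cons[of t x y] in_xy in_y
      using Fy by (simp add: field_simps)
    then show ?thesis using deriv unfolding C_Cons by simp
  qed
qed simp

end

section \<open>Tail masses are polynomials in time\<close>

lemma has_real_derivative_power_div_fact:
  assumes "n \<ge> 1"
  shows "((\<lambda>s::real. s ^ n / fact n) has_real_derivative t ^ (n - 1) / fact (n - 1)) (at t within X)"
proof -
  obtain m where n: "n = Suc m" using assms by (cases n) auto
  have "((\<lambda>s::real. s ^ n / fact n) has_real_derivative real n * t ^ m / fact n) (at t within X)"
    unfolding n by (intro derivative_eq_intros) auto
  moreover have "real n * t ^ m / fact n = t ^ m / fact m"
    unfolding n fact_Suc of_nat_mult by (rule mult_divide_mult_cancel_left) simp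
  ultimately show ?thesis unfolding n by simp
qed

context oriented_flow
begin

lemma finite_paths_from: "finite (paths_from r x)"
proof -
  have "paths_from r x \<subseteq> {c. path_in r c \<and> hd c = x \<and> length c \<le> N}"
    unfolding paths_from_def using path_length_le by auto
  then show ?thesis using finite_paths_bounded_length[of r x N] finite_succ finite_subset by blast
qed

lemma finite_paths_to: "finite (paths_to r x)"
proof -
  have "paths_to r x \<subseteq> rev ` {c. path_in (\<lambda>a b. r b a) c \<and> hd c = x \<and> length c \<le> N}"
  proof
    fix c assume "c \<in> paths_to r x"
    then have c: "path_in r c" "last c = x" unfolding paths_to_def by auto
    then have "rev c \<in> {c. path_in (\<lambda>a b. r b a) c \<and> hd c = x \<and> length c \<le> N}"
      using path_length_le[OF c(1)] path_in_rev[of r "rev c"] path_in_not_Nil[OF c(1)]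
      by (auto simp: hd_rev)
    then show "c \<in> rev ` {c. path_in (\<lambda>a b. r b a) c \<and> hd c = x \<and> length c \<le> N}"
      by (metis rev_rev_ident image_eqI)
  qed
  moreover have "finite {c. path_in (\<lambda>a b. r b a) c \<and> hd c = x \<and> length c \<le> N}"
    using finite_paths_bounded_length[of "\<lambda>a b. r b a" x N] finite_pred by auto
  ultimately show ?thesis using finite_subset by blast
qed

lemma finite_paths_to_sinks: "finite (paths_to_sinks r x)"
  by (rule finite_subset[OF _ finite_paths_from[of x]]) (auto simp: paths_to_sinks_def paths_from_def)

lemma finite_paths_from_sources: "finite (paths_from_sources r x)"
  by (rule finite_subset[OF _ finite_paths_to[of x]]) (auto simp: paths_from_sources_def paths_to_def)

text \<open>The total weight of the continuations of \<open>p\<close> to a sink; for \<open>p = [x]\<close> this is \<open>m(x) P\<^sub>t(x)\<close>.\<close>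
definition tail_mass :: "'v list \<Rightarrow> real \<Rightarrow> real" where
  "tail_mass p t = (\<Sum>b\<in>paths_to_sinks r (last p). C t (p @ tl b))"

lemma has_derivative_tail_mass:
  assumes p: "path_in r p" and t: "t \<in> {0..1}"
  shows "((\<lambda>s. tail_mass p s) has_real_derivative (\<Sum>w\<in>{w. r w (hd p)}. tail_mass (w # p) t))
    (at t within {0..1})"
proof -
  have ne: "p \<noteq> []" using path_in_not_Nil[OF p] .
  have "((\<lambda>s. tail_mass p s) has_real_derivative
      (\<Sum>b\<in>paths_to_sinks r (last p). inflow t (p @ tl b) - outflow t (p @ tl b))) (at t within {0..1})"
    unfolding tail_mass_def
  proof (rule DERIV_sum)
    fix b assume "b \<in> paths_to_sinks r (last p)"
    then have b: "path_in r b" "hd b = last p" unfolding paths_to_sinks_def by auto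
    show "((\<lambda>s. C s (p @ tl b)) has_real_derivative inflow t (p @ tl b) - outflow t (p @ tl b))
        (at t within {0..1})"
      by (rule has_derivative_Cpath[OF path_in_join[OF p b(1)] t]) (use b in simp)
  qed
  moreover have "inflow t (p @ tl b) - outflow t (p @ tl b) = (\<Sum>w\<in>{w. r w (hd p)}. C t (w # p @ tl b))"
    if "b \<in> paths_to_sinks r (last p)" for b
  proof -
    have b: "path_in r b" "hd b = last p" "last b \<in> Bset r"
      using that unfolding paths_to_sinks_def by auto
    then have "last (p @ tl b) \<in> Bset r"
      using ne path_in_not_Nil[OF b(1)] last_join by metis
    then have "outflow t (p @ tl b) = 0" by (simp add: outflow_def Bset_def fwd_def)
    then show ?thesis using ne by (simp add: inflow_def)
  qed
  ultimately show ?thesis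
    unfolding tail_mass_def using ne by (simp add: sum.swap[of _ "{w. r w (hd p)}"])
qed

definition tail_poly :: "'v list \<Rightarrow> real \<Rightarrow> real" where
  "tail_poly p t = (\<Sum>q\<in>paths_to r (hd p).
     tail_mass (butlast q @ p) 0 * t ^ (length q - 1) / fact (length q - 1))"

lemma tail_poly_decomp:
  assumes ne: "p \<noteq> []"
  shows "tail_poly p t = tail_mass p 0 +
    (\<Sum>w\<in>{w. r w (hd p)}. \<Sum>q\<in>paths_to r w. tail_mass (q @ p) 0 * t ^ length q / fact (length q))"
proof -
  let ?x = "hd p"
  let ?A = "\<lambda>w. (\<lambda>c. c @ [?x]) ` paths_to r w"
  let ?f = "\<lambda>q. tail_mass (butlast q @ p) 0 * t ^ (length q - 1) / fact (length q - 1)"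
  have decomp: "paths_to r ?x = insert [?x] (\<Union>w\<in>{w. r w ?x}. ?A w)"
    by (rule paths_to_decomp)
  have "[?x] \<notin> (\<Union>w\<in>{w. r w ?x}. ?A w)"
    unfolding paths_to_def using path_in_not_Nil by fastforce
  moreover have "finite (\<Union>w\<in>{w. r w ?x}. ?A w)" using finite_pred finite_paths_to by auto
  ultimately have "tail_poly p t = ?f [?x] + sum ?f (\<Union>w\<in>{w. r w ?x}. ?A w)"
    unfolding tail_poly_def decomp by simp
  also have "sum ?f (\<Union>w\<in>{w. r w ?x}. ?A w) = (\<Sum>w\<in>{w. r w ?x}. sum ?f (?A w))"
    using finite_pred finite_paths_to by (intro sum.UNION_disjoint) (auto simp: paths_to_def)
  also have "\<dots> = (\<Sum>w\<in>{w. r w ?x}. \<Sum>q\<in>paths_to r w. tail_mass (q @ p) 0 * t ^ length q / fact (length q))"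
  proof (rule sum.cong[OF refl])
    fix w
    have "sum ?f (?A w) = sum (?f \<circ> (\<lambda>c. c @ [?x])) (paths_to r w)"
      by (rule sum.reindex) (auto simp: inj_on_def)
    then show "sum ?f (?A w) = (\<Sum>q\<in>paths_to r w. tail_mass (q @ p) 0 * t ^ length q / fact (length q))"
      by simp
  qed
  finally show ?thesis by simp
qed

lemma tail_poly_Cons:
  assumes "p \<noteq> []"
  shows "tail_poly (w # p) t =
    (\<Sum>q\<in>paths_to r w. tail_mass (q @ p) 0 * t ^ (length q - 1) / fact (length q - 1))"
  unfolding tail_poly_def list.sel(1)
proof (rule sum.cong[OF refl])
  fix q assume "q \<in> paths_to r w"
  then have "q \<noteq> []" "last q = w" unfolding paths_to_def by (auto dest: path_in_not_Nil)
  then have "butlast q @ [w] = q" by (metis append_butlast_last_id)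
  then show "tail_mass (butlast q @ w # p) 0 * t ^ (length q - 1) / fact (length q - 1) =
      tail_mass (q @ p) 0 * t ^ (length q - 1) / fact (length q - 1)"
    by (metis append.assoc append_Cons append_Nil)
qed

lemma has_derivative_tail_poly:
  assumes ne: "p \<noteq> []"
  shows "((\<lambda>s. tail_poly p s) has_real_derivative (\<Sum>w\<in>{w. r w (hd p)}. tail_poly (w # p) t))
    (at t within X)"
proof -
  have "((\<lambda>s. tail_poly p s) has_real_derivative 0 + (\<Sum>w\<in>{w. r w (hd p)}. \<Sum>q\<in>paths_to r w.
      tail_mass (q @ p) 0 * (t ^ (length q - 1) / fact (length q - 1)))) (at t within X)"
    unfolding tail_poly_decomp[OF ne] times_divide_eq_right[symmetric]
  proof (intro DERIV_add DERIV_const DERIV_sum DERIV_cmult has_real_derivative_power_div_fact)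
    fix w q assume "q \<in> paths_to r w"
    then show "1 \<le> length q"
      unfolding paths_to_def by (auto dest: path_in_not_Nil simp: Suc_le_eq)
  qed
  then show ?thesis unfolding tail_poly_Cons[OF ne] by simp
qed

lemma tail_poly_0:
  assumes "p \<noteq> []"
  shows "tail_poly p 0 = tail_mass p 0"
proof -
  have "length q \<noteq> 0" if "q \<in> paths_to r w" for q w
    using that unfolding paths_to_def by (auto dest: path_in_not_Nil)
  then show ?thesis unfolding tail_poly_decomp[OF assms] by (simp add: sum.neutral)
qed

text \<open>Both sides satisfy \<open>X'(p) = \<Sum>\<^sub>w\<^sub>\<rightarrow>\<^sub>h\<^sub>d \<^sub>p X(w # p)\<close> and agree at \<open>0\<close>; the recursion
  terminates because oriented paths have bounded length.\<close>
lemma tail_mass_eq_tail_poly: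
  assumes "path_in r p" and "t \<in> {0..1}"
  shows "tail_mass p t = tail_poly p t"
  using assms
proof (induction "N - length p" arbitrary: p t rule: less_induct)
  case less
  have ne: "p \<noteq> []" using path_in_not_Nil[OF less.prems(1)] .
  have IH: "tail_mass (w # p) s = tail_poly (w # p) s" if "r w (hd p)" "s \<in> {0..1}" for w s
  proof (rule less.hyps)
    show pw: "path_in r (w # p)" using less.prems(1) that ne by (auto simp: path_in_Cons)
    show "N - length (w # p) < N - length p" using path_length_le[OF pw] by simp
  qed (use that in auto)
  have "((\<lambda>s. tail_mass p s - tail_poly p s) has_real_derivative 0) (at s within {0..1})"
    if "s \<in> {0..1}" for s
    using DERIV_diff[OF has_derivative_tail_mass[OF less.prems(1) that] has_derivative_tail_poly[OF ne]]
      IH that by simp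
  then obtain k where k: "\<forall>s\<in>{0..1}. tail_mass p s - tail_poly p s = k"
    using has_field_derivative_zero_constant[of "{0..1::real}" "\<lambda>s. tail_mass p s - tail_poly p s"]
    by auto
  moreover have "tail_mass p 0 - tail_poly p 0 = 0" using tail_poly_0[OF ne] by simp
  ultimately have "k = 0" by auto
  then show ?case using k less.prems(2) by auto
qed

end

context oriented_flow
begin

lemma path_distinct:
  assumes p: "path_in r c"
  shows "distinct c"
proof (rule ccontr)
  assume "\<not> distinct c"
  then obtain i j where ij: "i < j" "j < length c" "c ! i = c ! j"
    by (metis distinct_conv_nth linorder_neqE_nat)
  let ?q = "drop i (take (Suc j) c)"
  have q: "path_in r ?q" using p ij by (intro path_in_drop path_in_take) auto
  have "hd ?q = c ! i" "last ?q = c ! j" using ij by (simp_all add: hd_drop_conv_nth last_conv_nth)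
  then have "length ?q = 1" using path_length[OF q] path_length[of "[c ! i]"] ij by simp
  then show False using ij by simp
qed

lemma Cpath_nonneg: "path_in r c \<Longrightarrow> t \<in> {0..1} \<Longrightarrow> C t c \<ge> 0"
proof (induction c rule: induct_list012)
  case (3 x y zs)
  then show ?case
    using G_pos[of x y t] F_pos[of x y "hd zs" t]
    by (cases zs) (auto simp: Cpath_Cons_Cons_Cons)
qed (simp_all add: F_nonneg)

lemma Cpath_pos: "path_in r c \<Longrightarrow> length c \<ge> 2 \<Longrightarrow> t \<in> {0..1} \<Longrightarrow> C t c > 0"
proof (induction c rule: induct_list012)
  case (3 x y zs)
  then show ?case
    using G_pos[of x y t] F_pos[of x y "hd zs" t]
    by (cases zs) (auto simp: Cpath_Cons_Cons_Cons)
qed simp_all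

lemma Cpath_extremal_const:
  assumes e: "extremal r c" and t: "t \<in> {0..1}"
  shows "C t c = C 0 c"
proof -
  have p: "path_in r c" and "{w. r w (hd c)} = {}" "{u. r (last c) u} = {}"
    using e unfolding extremal_def Aset_def Bset_def fwd_def bwd_def by auto
  then have "((\<lambda>s. C s c) has_real_derivative 0) (at s within {0..1})" if "s \<in> {0..1}" for s
    using has_derivative_Cpath[OF p that] by (simp add: inflow_def outflow_def)
  then obtain k where "\<forall>s\<in>{0..1}. C s c = k"
    using has_field_derivative_zero_constant[of "{0..1::real}" "\<lambda>s. C s c"] by auto
  then show ?thesis using t by auto
qed

lemma paths_from_sources_nonempty: "paths_from_sources r x \<noteq> {}"
proof -
  have "\<exists>c. c \<in> paths_to r x \<and> (\<forall>c'. c' \<in> paths_to r x \<longrightarrow> length c' \<le> length c)"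
    by (rule ex_has_greatest_nat[of _ "[x]" _ "Suc N"])
      (auto simp: paths_to_def le_imp_less_Suc path_length_le)
  then obtain c where c: "path_in r c" "last c = x"
    and longest: "\<And>c'. c' \<in> paths_to r x \<Longrightarrow> length c' \<le> length c"
    unfolding paths_to_def by blast
  have "hd c \<in> Aset r"
  proof (rule ccontr)
    assume "hd c \<notin> Aset r"
    then obtain w where "r w (hd c)" by (auto simp: Aset_def bwd_def)
    then have "w # c \<in> paths_to r x"
      using c path_in_not_Nil[OF c(1)] unfolding paths_to_def by (auto simp: path_in_Cons)
    from longest[OF this] show False by simp
  qed
  then show ?thesis using c unfolding paths_from_sources_def by auto
qed

definition source_mass :: "'v \<Rightarrow> real" where
  "source_mass x = (\<Sum>a\<in>paths_from_sources r x. C 0 a)"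

lemma finite_paths_between: "finite (paths_between r x z)"
  by (rule finite_subset[OF _ finite_paths_to[of z]]) (auto simp: paths_between_def paths_to_def)

lemma finite_sink_paths_via: "finite (sink_paths_via r x z)"
  by (rule finite_subset[OF _ finite_paths_from[of x]]) (auto simp: sink_paths_via_def paths_from_def)

lemma inj_on_join:
  assumes "\<And>a. a \<in> A \<Longrightarrow> path_in r a \<and> last a = y"
    and "\<And>b. b \<in> B \<Longrightarrow> path_in r b \<and> hd b = y"
  shows "inj_on (\<lambda>(a, b). a @ tl b) (A \<times> B)"
proof (rule inj_onI, clarsimp)
  fix a b a' b' assume m: "a \<in> A" "b \<in> B" "a' \<in> A" "b' \<in> B" and eq: "a @ tl b = a' @ tl b'"
  have pa: "path_in r a" "last a = y" "path_in r b" "hd b = y"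
    and pa': "path_in r a'" "last a' = y" "path_in r b'" "hd b' = y" using assms m by auto
  have "distinct (a @ tl b)" using path_distinct[OF path_in_join[OF pa(1,3)]] pa by simp
  then show "a = a' \<and> b = b'"
    by (rule join_eq_joinD[OF _ _ _ _ _ pa(2) pa(4) pa'(2) pa'(4) eq])
       (use pa pa' path_in_not_Nil in auto)
qed

lemma sum_tail_mass_paths_between:
  "(\<Sum>q\<in>paths_between r x z. tail_mass q 0) = (\<Sum>c\<in>sink_paths_via r x z. C 0 c)"
proof -
  have "(\<Sum>q\<in>paths_between r x z. tail_mass q 0) =
      (\<Sum>q\<in>paths_between r x z. \<Sum>b\<in>paths_to_sinks r z. C 0 (q @ tl b))"
    unfolding tail_mass_def by (rule sum.cong) (auto simp: paths_between_def)
  also have "\<dots> = (\<Sum>c\<in>sink_paths_via r x z. C 0 c)"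
    unfolding join_paths_between_paths_to_sinks[symmetric]
    by (rule sum_join_image[OF finite_paths_between finite_paths_to_sinks inj_on_join[where y = z]])
       (auto simp: paths_between_def paths_to_sinks_def)
  finally show ?thesis .
qed

text \<open>Gluing at \<open>x\<close> multiplies weights and divides by \<open>F 0 x\<close>; this relates \<open>m(x, z)\<close> to the
  weights of the paths from \<open>x\<close> through \<open>z\<close>.\<close>
lemma source_mass_mult_sum_tail_mass:
  "source_mass x * (\<Sum>q\<in>paths_between r x z. tail_mass q 0) = F 0 x * mval r F G [x, z]"
proof -
  have "C 0 a * C 0 b = F 0 x * C 0 (a @ tl b)"
    if a: "a \<in> paths_from_sources r x" and b: "b \<in> sink_paths_via r x z" for a b
  proof -
    have pa: "path_in r a" "last a = x" and pb: "path_in r b" "hd b = x"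
      using a b unfolding paths_from_sources_def sink_paths_via_def by auto
    have "C 0 (a @ tl b) * F 0 (hd b) = C 0 a * C 0 b"
    proof (rule Cpath_join)
      show "a \<noteq> []" "b \<noteq> []" using pa pb path_in_not_Nil by auto
      assume "2 \<le> length a" "2 \<le> length b"
      then have "r (a ! (length a - 2)) x" "r x (b ! 1)"
        using path_in_first_last_edge[OF pa(1)] path_in_first_last_edge[OF pb(1)] pa pb by auto
      then show "F 0 (hd b) \<noteq> 0" using F_pos[of _ x _ 0] pb by fastforce
    qed (use pa pb in simp)
    then show ?thesis using pb by (simp add: ac_simps)
  qed
  then have "source_mass x * (\<Sum>c\<in>sink_paths_via r x z. C 0 c) =
      (\<Sum>a\<in>paths_from_sources r x. \<Sum>b\<in>sink_paths_via r x z. F 0 x * C 0 (a @ tl b))"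
    unfolding source_mass_def sum_product by (intro sum.cong refl) auto
  also have "\<dots> = F 0 x * (\<Sum>a\<in>paths_from_sources r x. \<Sum>b\<in>sink_paths_via r x z. C 0 (a @ tl b))"
    by (simp add: sum_distrib_left)
  also have "(\<Sum>a\<in>paths_from_sources r x. \<Sum>b\<in>sink_paths_via r x z. C 0 (a @ tl b)) =
      (\<Sum>c\<in>extremal_via r x z. C 0 c)"
    unfolding join_paths_from_sources_sink_paths_via[symmetric]
    by (rule sum_join_image[OF finite_paths_from_sources finite_sink_paths_via inj_on_join[where y = x]])
       (auto simp: paths_from_sources_def sink_paths_via_def)
  finally show ?thesis unfolding mval_pair sum_tail_mass_paths_between .
qed

end

context oriented_flow
begin

lemma source_mass_nonneg_le: "a \<in> paths_from_sources r x \<Longrightarrow> C 0 a \<le> source_mass x"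
  unfolding source_mass_def
  by (rule member_le_sum[OF _ _ finite_paths_from_sources])
    (auto simp: paths_from_sources_def intro: Cpath_nonneg)

lemma source_mass_pos:
  assumes "x \<notin> Aset r"
  shows "source_mass x > 0"
proof -
  obtain a where a: "a \<in> paths_from_sources r x" using paths_from_sources_nonempty by blast
  then have pa: "path_in r a" "hd a \<in> Aset r" "last a = x" unfolding paths_from_sources_def by auto
  have "length a \<ge> 2"
  proof (rule ccontr)
    assume "\<not> length a \<ge> 2"
    then have "length a = 1" using path_in_not_Nil[OF pa(1)] by (cases a) (auto simp: Suc_le_eq)
    then have "hd a = last a" by (cases a) auto
    then show False using pa assms by simp
  qed
  then show ?thesis using Cpath_pos[OF pa(1)] source_mass_nonneg_le[OF a] by fastforce
qed

text \<open>A source without initial mass has nothing to send: its outgoing flow would make \<open>F\<close>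
  negative right after time \<open>0\<close>.\<close>
lemma source_without_mass_is_sink:
  assumes A: "x \<in> Aset r" and F0: "F 0 x = 0"
  shows "x \<in> Bset r"
proof (rule ccontr)
  assume "x \<notin> Bset r"
  then obtain u where u: "r x u" by (auto simp: Bset_def fwd_def)
  have "(\<Sum>v\<in>{v. r x v}. G 0 x v) > 0"
    by (rule sum_pos) (use finite_succ u G_pos in auto)
  moreover have "{w. r w x} = {}" using A by (simp add: Aset_def bwd_def)
  ultimately have "- div_g r (G 0) x < 0" unfolding div_g_def fwd_def bwd_def by simp
  then obtain d where d: "d > 0" "\<And>h. h > 0 \<Longrightarrow> 0 + h \<in> {0..1} \<Longrightarrow> h < d \<Longrightarrow> F 0 x > F (0 + h) x"
    using has_real_derivative_neg_dec_right[OF F_deriv[of 0 x]] by auto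
  define h where "h = min (d / 2) 1"
  have "F 0 x > F h x" using d(2)[of h] d(1) unfolding h_def by auto
  moreover have "F h x \<ge> 0" using F_nonneg d(1) unfolding h_def by auto
  ultimately show False using F0 by simp
qed

lemma path_from_sink:
  assumes "x \<in> Bset r" "path_in r c" "hd c = x"
  shows "c = [x]"
proof -
  have "\<not> length c \<ge> 2"
    using path_in_first_last_edge(1)[OF assms(2)] assms(1,3) by (auto simp: Bset_def fwd_def)
  then show ?thesis using assms(2,3) path_in_not_Nil[OF assms(2)] by (cases c rule: remdups_adj.cases) auto
qed

definition P_coeff :: "'v \<Rightarrow> real" where
  "P_coeff x = F 0 x / source_mass x"

lemma sum_tail_mass_paths_between_eq:
  "(\<Sum>q\<in>paths_between r x z. tail_mass q 0) = mval r F G [x, z] * P_coeff x"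
proof (cases "source_mass x = 0")
  case False
  then show ?thesis
    using source_mass_mult_sum_tail_mass[of x z] unfolding P_coeff_def by (simp add: field_simps)
next
  case True
  then have A: "x \<in> Aset r" using source_mass_pos by fastforce
  then have "[x] \<in> paths_from_sources r x" unfolding paths_from_sources_def by simp
  then have F0: "F 0 x = 0" using source_mass_nonneg_le[of "[x]" x] True F_nonneg[of 0 x] by simp
  have B: "x \<in> Bset r" by (rule source_without_mass_is_sink[OF A F0])
  have "tail_mass q 0 = 0" if "q \<in> paths_between r x z" for q
  proof -
    have "q = [x]" using that path_from_sink[OF B] unfolding paths_between_def by auto
    moreover have "C 0 (x # tl b) = 0" if "b \<in> paths_to_sinks r x" for b
    proof -
      have "b = [x]" using that path_from_sink[OF B] unfolding paths_to_sinks_def by blast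
      then show ?thesis using F0 by simp
    qed
    ultimately show ?thesis unfolding tail_mass_def by (auto intro!: sum.neutral)
  qed
  then show ?thesis unfolding P_coeff_def using True by simp
qed

lemma tail_poly_singleton:
  "tail_poly [z] t = (\<Sum>x\<in>{x. oleq r x z}.
     (\<Sum>q\<in>paths_between r x z. tail_mass q 0) * t ^ \<delta> x z / fact (\<delta> x z))"
proof -
  have "tail_poly [z] t = (\<Sum>q\<in>paths_to r z. tail_mass q 0 * t ^ (length q - 1) / fact (length q - 1))"
    unfolding tail_poly_def
    by (rule sum.cong) (auto simp: paths_to_def dest!: path_in_not_Nil intro: arg_cong[of _ _ "\<lambda>q. tail_mass q 0"] append_butlast_last_id)
  also have "\<dots> = (\<Sum>x\<in>hd ` paths_to r z. \<Sum>q\<in>{q \<in> paths_to r z. hd q = x}.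
      tail_mass q 0 * t ^ (length q - 1) / fact (length q - 1))"
    by (rule sum.image_gen[OF finite_paths_to])
  also have "\<dots> = (\<Sum>x\<in>{x. oleq r x z}.
      (\<Sum>q\<in>paths_between r x z. tail_mass q 0) * t ^ \<delta> x z / fact (\<delta> x z))"
  proof (rule sum.cong)
    show "hd ` paths_to r z = {x. oleq r x z}" unfolding paths_to_def oleq_def by auto
  next
    fix x
    have "{q \<in> paths_to r z. hd q = x} = paths_between r x z"
      unfolding paths_to_def paths_between_def by auto
    moreover have "length q - 1 = \<delta> x z" if "q \<in> paths_between r x z" for q
      using that path_length unfolding paths_between_def by auto
    ultimately show "(\<Sum>q\<in>{q \<in> paths_to r z. hd q = x}. tail_mass q 0 * t ^ (length q - 1) / fact (length q - 1)) =
        (\<Sum>q\<in>paths_between r x z. tail_mass q 0) * t ^ \<delta> x z / fact (\<delta> x z)"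
      by (simp add: sum_distrib_right sum_divide_distrib)
  qed
  finally show ?thesis .
qed

theorem sum_paths_to_sinks_formula:
  "\<exists>a. \<forall>t\<in>{0..1}. \<forall>z. (\<Sum>c\<in>paths_to_sinks r z. C t c) =
     (\<Sum>x\<in>{x. oleq r x z}. mval r F G [x, z] * a x * t ^ \<delta> x z / fact (\<delta> x z))"
proof (intro exI ballI allI)
  fix t z assume t: "t \<in> {0..1::real}"
  have "(\<Sum>c\<in>paths_to_sinks r z. C t c) = tail_mass [z] t"
    unfolding tail_mass_def
    by (rule sum.cong) (auto simp: paths_to_sinks_def dest!: path_in_not_Nil simp: neq_Nil_conv)
  also have "\<dots> = tail_poly [z] t" using t by (intro tail_mass_eq_tail_poly) auto
  finally show "(\<Sum>c\<in>paths_to_sinks r z. C t c) =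
     (\<Sum>x\<in>{x. oleq r x z}. mval r F G [x, z] * P_coeff x * t ^ \<delta> x z / fact (\<delta> x z))"
    unfolding tail_poly_singleton sum_tail_mass_paths_between_eq .
qed

end

section \<open>Time reversal\<close>

lemma has_real_derivative_reflect:
  assumes "(\<phi> has_real_derivative D) (at (1 - t) within {0..1})"
  shows "((\<lambda>s. \<phi> (1 - s)) has_real_derivative (- D)) (at t within {0..1})"
proof -
  have "(\<lambda>s. 1 - s) ` {0..1::real} = {0..1}"
    by (auto intro: image_eqI[where x = "1 - y" for y])
  moreover have "((\<lambda>s. 1 - s) has_real_derivative -1) (at t within {0..1})"
    by (intro derivative_eq_intros) auto
  ultimately have "(\<phi> \<circ> (\<lambda>s. 1 - s) has_real_derivative D * -1) (at t within {0..1})"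
    using assms by (intro DERIV_image_chain) auto
  then show ?thesis by (simp add: o_def)
qed

context oriented_flow
begin

text \<open>Reversing time and orientation again gives a geodesic flow: \<open>Q\<close> for the original data is
  \<open>P\<close> for the reversed one.\<close>
lemma oriented_flow_reverse:
  "oriented_flow (\<lambda>x y. r y x) (\<lambda>t. F (1 - t)) (\<lambda>t x y. G (1 - t) y x) (\<lambda>t x y z. H (1 - t) z y x)
     (\<lambda>x y. \<delta> y x) N"
proof unfold_locales
  fix c assume "path_in (\<lambda>x y. r y x) c"
  then have c: "path_in r (rev c)" "c \<noteq> []" by (simp_all add: path_in_rev path_in_not_Nil)
  show "length c = Suc (\<delta> (last c) (hd c))"
    using path_length[OF c(1)] c(2) by (simp add: hd_rev last_rev)
  show "length c \<le> N" using path_length_le[OF c(1)] by simp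
next
  fix x and t :: real assume "t \<in> {0..1}"
  then have "((\<lambda>s. F (1 - s) x) has_real_derivative (- (- div_g r (G (1 - t)) x))) (at t within {0..1})"
    by (intro has_real_derivative_reflect F_deriv) auto
  then show "((\<lambda>s. F (1 - s) x) has_real_derivative
      - div_g (\<lambda>x y. r y x) (\<lambda>x y. G (1 - t) y x) x) (at t within {0..1})"
    unfolding div_g_def fwd_def bwd_def by simp
next
  fix x y and t :: real assume "r y x" "t \<in> {0..1}"
  then have "((\<lambda>s. G (1 - s) y x) has_real_derivative (- (- div_h r (H (1 - t)) y x))) (at t within {0..1})"
    by (intro has_real_derivative_reflect G_deriv) auto
  then show "((\<lambda>s. G (1 - s) y x) has_real_derivative
      - div_h (\<lambda>x y. r y x) (\<lambda>x y z. H (1 - t) z y x) x y) (at t within {0..1})"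
    unfolding div_h_def fwd_def bwd_def by simp
next
  fix x y z and t :: real assume "r y x" "r z y" "t \<in> {0..1}"
  then show "F (1 - t) y * H (1 - t) z y x = G (1 - t) y x * G (1 - t) z y"
    using F_H_eq[of z y x "1 - t"] by (simp add: mult.commute)
qed (use finite_succ finite_pred G_pos F_nonneg in auto)

lemma Cpath_reverse: "Cpath (\<lambda>t. F (1 - t)) (\<lambda>t x y. G (1 - t) y x) s (rev c) = C (1 - s) c"
  by (rule Cpath_rev) simp_all

lemma mval_converse:
  "mval (\<lambda>x y. r y x) (\<lambda>t. F (1 - t)) (\<lambda>t x y. G (1 - t) y x) [y, z] = mval r F G [z, y]"
proof -
  have "mval (\<lambda>x y. r y x) (\<lambda>t. F (1 - t)) (\<lambda>t x y. G (1 - t) y x) [y, z] =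
      (\<Sum>c\<in>extremal_via r z y. C 1 c)"
    unfolding mval_pair extremal_via_converse[of r] by (subst sum.reindex) (auto simp: inj_on_def Cpath_reverse)
  also have "\<dots> = (\<Sum>c\<in>extremal_via r z y. C 0 c)"
    using Cpath_extremal_const[where t = 1] by (intro sum.cong refl) (simp add: extremal_via_def)
  finally show ?thesis unfolding mval_pair .
qed

theorem sum_paths_from_sources_formula:
  "\<exists>b. \<forall>t\<in>{0..1}. \<forall>z. (\<Sum>c\<in>paths_from_sources r z. C t c) =
     (\<Sum>y\<in>{y. oleq r z y}. mval r F G [z, y] * b y * (1 - t) ^ \<delta> z y / fact (\<delta> z y))"
proof -
  interpret rev: oriented_flow "\<lambda>x y. r y x" "\<lambda>t. F (1 - t)" "\<lambda>t x y. G (1 - t) y x"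
    "\<lambda>t x y z. H (1 - t) z y x" "\<lambda>x y. \<delta> y x" N
    by (rule oriented_flow_reverse)
  obtain b where b: "\<forall>t\<in>{0..1}. \<forall>z. (\<Sum>c\<in>paths_to_sinks (\<lambda>x y. r y x) z. rev.C t c) =
     (\<Sum>y\<in>{y. oleq r z y}. mval r F G [z, y] * b y * t ^ \<delta> z y / fact (\<delta> z y))"
    using rev.sum_paths_to_sinks_formula unfolding mval_converse oleq_converse[of r] by blast
  have "(\<Sum>c\<in>paths_from_sources r z. C t c) = (\<Sum>c\<in>paths_to_sinks (\<lambda>x y. r y x) z. rev.C (1 - t) c)"
    for t z
    unfolding paths_to_sinks_converse[of r] by (simp add: sum.reindex inj_on_def Cpath_reverse)
  then show ?thesis using b by (intro exI[of _ b]) simp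
qed

end

context connected_graph
begin

lemma W1plus_geodesic_oriented_flow:
  assumes "W1plus_geodesic adj f g h"
  obtains N where "oriented_flow (orient adj (f 0) (f 1)) f g h d N"
proof -
  let ?r = "orient adj (f 0) (f 1)"
  have geo: "(\<forall>t\<in>{0..1}. prob_dist (f t)) \<and>
     (\<forall>x. \<forall>t\<in>{0..1}. ((\<lambda>s. f s x) has_real_derivative (- div_g ?r (g t) x)) (at t within {0..1})) \<and>
     (\<forall>x y. ?r x y \<longrightarrow> (\<forall>t\<in>{0..1}.
        ((\<lambda>s. g s x y) has_real_derivative (- div_h ?r (h t) x y)) (at t within {0..1}))) \<and>
     (\<forall>x y. ?r x y \<longrightarrow> (\<forall>t\<in>{0..1}. g t x y > 0)) \<and>
     (\<forall>x y z. ?r x y \<longrightarrow> ?r y z \<longrightarrow> (\<forall>t\<in>{0..1}. f t y * h t x y z = g t x y * g t y z))"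
    using assms unfolding W1plus_geodesic_def Let_def by blast
  then have "prob_dist (f 0)" "prob_dist (f 1)" by auto
  then obtain N where N: "\<And>c. path_in ?r c \<Longrightarrow> length c \<le> N"
    using orient_path_length_bounded by blast
  show thesis
  proof (rule that, unfold_locales)
    show "finite {y. ?r x y}" "finite {y. ?r y x}" for x
      using loc_fin sym orient_adj by (auto intro: finite_subset[of _ "{y. adj x y}"])
  qed (use geo N orient_path_length in \<open>auto simp: prob_dist_def\<close>)
qed

end

theorem proposition3p14:
  fixes adj :: "'v \<Rightarrow> 'v \<Rightarrow> bool"
    and f :: "real \<Rightarrow> 'v \<Rightarrow> real"
    and g :: "real \<Rightarrow> 'v \<Rightarrow> 'v \<Rightarrow> real"
    and h :: "real \<Rightarrow> 'v \<Rightarrow> 'v \<Rightarrow> 'v \<Rightarrow> real"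
  assumes sym: "\<forall>x y. adj x y \<longrightarrow> adj y x"
    and irrefl: "\<forall>x. \<not> adj x x"
    and loc_fin: "\<forall>x. finite {y. adj x y}"
    and connected: "\<forall>x y. \<exists>\<gamma>. path_in adj \<gamma> \<and> hd \<gamma> = x \<and> last \<gamma> = y"
    and geod: "W1plus_geodesic adj f g h"
  shows "\<exists>a b :: 'v \<Rightarrow> real. \<forall>t\<in>{0..1}. \<forall>z.
     Pt (orient adj (f 0) (f 1)) f g t z =
       (1 / mval (orient adj (f 0) (f 1)) f g [z]) *
       (\<Sum>x\<in>{x. oleq (orient adj (f 0) (f 1)) x z}.
          mval (orient adj (f 0) (f 1)) f g [x, z] * a x * t ^ gdist adj x z / fact (gdist adj x z))
   \<and> Qt (orient adj (f 0) (f 1)) f g t z =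
       (1 / mval (orient adj (f 0) (f 1)) f g [z]) *
       (\<Sum>y\<in>{y. oleq (orient adj (f 0) (f 1)) z y}.
          mval (orient adj (f 0) (f 1)) f g [z, y] * b y * (1 - t) ^ gdist adj z y / fact (gdist adj z y))"
proof -
  interpret connected_graph adj using sym loc_fin connected by unfold_locales
  obtain N where "oriented_flow (orient adj (f 0) (f 1)) f g h (gdist adj) N"
    using W1plus_geodesic_oriented_flow[OF geod] .
  then interpret flow: oriented_flow "orient adj (f 0) (f 1)" f g h "gdist adj" N .
  obtain a where a: "\<forall>t\<in>{0..1}. \<forall>z. (\<Sum>c\<in>paths_to_sinks (orient adj (f 0) (f 1)) z. Cpath f g t c) =
      (\<Sum>x\<in>{x. oleq (orient adj (f 0) (f 1)) x z}.
         mval (orient adj (f 0) (f 1)) f g [x, z] * a x * t ^ gdist adj x z / fact (gdist adj x z))"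
    using flow.sum_paths_to_sinks_formula by blast
  obtain b where b: "\<forall>t\<in>{0..1}. \<forall>z. (\<Sum>c\<in>paths_from_sources (orient adj (f 0) (f 1)) z. Cpath f g t c) =
      (\<Sum>y\<in>{y. oleq (orient adj (f 0) (f 1)) z y}.
         mval (orient adj (f 0) (f 1)) f g [z, y] * b y * (1 - t) ^ gdist adj z y / fact (gdist adj z y))"
    using flow.sum_paths_from_sources_formula by blast
  show ?thesis
    using a b unfolding Pt_def Qt_def paths_to_sinks_def paths_from_sources_def by auto
qed

end
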